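(* Let $(M,g)$ be an $n$-dimensional Riemannian manifold and suppose that either (1) $n=3$ and $(M,g)$ has nonnegative sectional curvature, or (2) $n\ge4$ and $(M,g)$ has $2$-nonnegative curvature operator. Then $R^2-2|\operatorname{Ric}|^2\ge0$ everywhere on $M$.
   Context: The curvature operator $\mathcal{R}$ is the symmetric endomorphism of $\Lambda^2T_mM$ (with the inner product induced by $g$) normalized so that $\langle e_j\wedge e_k,\mathcal{R}(e_j\wedge e_k)\rangle$ is the sectional curvature of the plane spanned by orthonormal $e_j,e_k$. $(M,g)$ has $2$-nonnegative curvature operator if at every point the sum of the two smallest eigenvalues of $\mathcal{R}$ is nonnegative. $R$ is scalar curvature and $|\operatorname{Ric}|$ the norm of the Ricci tensor. *)

theory Defs
  imports "Jordan_Normal_Form.Char_Poly" "HOL-Computational_Algebra.Polynomial"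
begin

text \<open>Pointwise (algebraic) model.  At a point m of an n-dimensional Riemannian
manifold, fix an orthonormal basis e_0,...,e_(n-1) of T_mM.  The Riemann
tensor is given by components  Rm i j k l = <e_i \<and> e_j, R(e_k \<and> e_l)>,
so that Rm i j i j is the sectional curvature of span(e_i,e_j).\<close>

definition alg_curv_tensor :: "nat \<Rightarrow> (nat \<Rightarrow> nat \<Rightarrow> nat \<Rightarrow> nat \<Rightarrow> real) \<Rightarrow> bool" where
  "alg_curv_tensor n Rm \<longleftrightarrow>
     (\<forall>i<n. \<forall>j<n. \<forall>k<n. \<forall>l<n.
        Rm i j k l = - Rm j i k l \<and>
        Rm i j k l = Rm k l i j \<and>
        Rm i j k l + Rm j k i l + Rm k i j l = 0)"

definition curv4 :: "nat \<Rightarrow> (nat \<Rightarrow> nat \<Rightarrow> nat \<Rightarrow> nat \<Rightarrow> real)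
     \<Rightarrow> (nat \<Rightarrow> real) \<Rightarrow> (nat \<Rightarrow> real) \<Rightarrow> (nat \<Rightarrow> real) \<Rightarrow> (nat \<Rightarrow> real) \<Rightarrow> real" where
  "curv4 n Rm x y z w =
     (\<Sum>i<n. \<Sum>j<n. \<Sum>k<n. \<Sum>l<n. Rm i j k l * x i * y j * z k * w l)"

definition ip :: "nat \<Rightarrow> (nat \<Rightarrow> real) \<Rightarrow> (nat \<Rightarrow> real) \<Rightarrow> real" where
  "ip n x y = (\<Sum>i<n. x i * y i)"

definition nonneg_sectional :: "nat \<Rightarrow> (nat \<Rightarrow> nat \<Rightarrow> nat \<Rightarrow> nat \<Rightarrow> real) \<Rightarrow> bool" where
  "nonneg_sectional n Rm \<longleftrightarrow>
     (\<forall>u v. ip n u u = 1 \<and> ip n v v = 1 \<and> ip n u v = 0 \<longrightarrow> curv4 n Rm u v u v \<ge> 0)"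

text \<open>Orthonormal basis e_i \<and> e_j (i<j) of \<Lambda>^2, listed.\<close>
definition wedge_pairs :: "nat \<Rightarrow> (nat \<times> nat) list" where
  "wedge_pairs n = [(i, j). i \<leftarrow> [0..<n], j \<leftarrow> [Suc i..<n]]"

definition curv_op_mat :: "nat \<Rightarrow> (nat \<Rightarrow> nat \<Rightarrow> nat \<Rightarrow> nat \<Rightarrow> real) \<Rightarrow> real mat" where
  "curv_op_mat n Rm =
     (let ps = wedge_pairs n; N = length ps in
      mat N N (\<lambda>(a, b). Rm (fst (ps ! a)) (snd (ps ! a)) (fst (ps ! b)) (snd (ps ! b))))"

text \<open>Eigenvalues of the curvature operator with multiplicity, in increasing order
(the characteristic polynomial of a real symmetric matrix splits over the reals).\<close>
definition curv_op_eigenvalues :: "nat \<Rightarrow> (nat \<Rightarrow> nat \<Rightarrow> nat \<Rightarrow> nat \<Rightarrow> real) \<Rightarrow> real list" where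
  "curv_op_eigenvalues n Rm = sorted_list_of_multiset (proots (char_poly (curv_op_mat n Rm)))"

definition two_nonneg_curv_op :: "nat \<Rightarrow> (nat \<Rightarrow> nat \<Rightarrow> nat \<Rightarrow> nat \<Rightarrow> real) \<Rightarrow> bool" where
  "two_nonneg_curv_op n Rm \<longleftrightarrow>
     (let ev = curv_op_eigenvalues n Rm in ev ! 0 + ev ! 1 \<ge> 0)"

definition ricci :: "nat \<Rightarrow> (nat \<Rightarrow> nat \<Rightarrow> nat \<Rightarrow> nat \<Rightarrow> real) \<Rightarrow> nat \<Rightarrow> nat \<Rightarrow> real" where
  "ricci n Rm j k = (\<Sum>i<n. Rm i j i k)"

definition scal :: "nat \<Rightarrow> (nat \<Rightarrow> nat \<Rightarrow> nat \<Rightarrow> nat \<Rightarrow> real) \<Rightarrow> real" where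
  "scal n Rm = (\<Sum>j<n. ricci n Rm j j)"

definition ricci_norm_sq :: "nat \<Rightarrow> (nat \<Rightarrow> nat \<Rightarrow> nat \<Rightarrow> nat \<Rightarrow> real) \<Rightarrow> real" where
  "ricci_norm_sq n Rm = (\<Sum>j<n. \<Sum>k<n. (ricci n Rm j k)\<^sup>2)"

end

theory Submission
  imports Defs "HOL-Analysis.Analysis"
begin

text \<open>For a unit vector \<open>v\<close>, \<open>Ric(v, v) = \<Sum>\<^sub>i \<langle>R(e\<^sub>i \<and> v), e\<^sub>i \<and> v\<rangle>\<close>, and with
  \<open>H\<^sub>i\<^sub>j\<^sub>k = v\<^sub>i e\<^sub>j \<and> e\<^sub>k + v\<^sub>j e\<^sub>k \<and> e\<^sub>i + v\<^sub>k e\<^sub>i \<and> e\<^sub>j\<close> one has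
  \<open>R/2 - Ric(v, v) = 1/6 \<Sum>\<^sub>i\<^sub>j\<^sub>k \<langle>R H\<^sub>i\<^sub>j\<^sub>k, H\<^sub>i\<^sub>j\<^sub>k\<rangle>\<close>.
  If the sectional curvature is nonnegative, both sums are nonnegative, because \<open>H\<^sub>i\<^sub>j\<^sub>k\<close> lives in
  \<open>\<Lambda>\<^sup>2\<close> of a 3-space and is therefore decomposable. If the curvature operator is 2-nonnegative,
  expand both sums in an orthonormal eigenbasis of \<open>\<R>\<close>: each becomes \<open>\<Sum>\<^sub>k \<lambda>\<^sub>k c\<^sub>k\<close> with weights
  \<open>0 \<le> c\<^sub>k \<le> 1\<close> of total at least 2 (this uses \<open>n \<ge> 4\<close>), which is nonnegative when \<open>\<lambda>\<^sub>1 + \<lambda>\<^sub>2 \<ge> 0\<close>.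
  Hence \<open>0 \<le> Ric \<le> R/2 g\<close>, and Cauchy--Schwarz for the semidefinite form \<open>Ric\<close> gives
  \<open>|Ric|\<^sup>2 \<le> R/2 tr Ric = R\<^sup>2/2\<close>. The spectral theorem for real symmetric matrices is obtained
  variationally, by minimising the quadratic form over unit vectors orthogonal to the eigenvectors
  already found.\<close>

section \<open>Symmetric matrices: the spectral theorem\<close>

definition basis_vec :: "nat \<Rightarrow> nat \<Rightarrow> real" where
  "basis_vec i = (\<lambda>j. if j = i then 1 else 0)"

definition mat_vec :: "nat \<Rightarrow> (nat \<Rightarrow> nat \<Rightarrow> real) \<Rightarrow> (nat \<Rightarrow> real) \<Rightarrow> nat \<Rightarrow> real" where
  "mat_vec N M x = (\<lambda>i. \<Sum>j<N. M i j * x j)"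

definition bilin_form :: "nat \<Rightarrow> (nat \<Rightarrow> nat \<Rightarrow> real) \<Rightarrow> (nat \<Rightarrow> real) \<Rightarrow> (nat \<Rightarrow> real) \<Rightarrow> real" where
  "bilin_form N M x y = (\<Sum>i<N. \<Sum>j<N. M i j * x i * y j)"

definition quad_form :: "nat \<Rightarrow> (nat \<Rightarrow> nat \<Rightarrow> real) \<Rightarrow> (nat \<Rightarrow> real) \<Rightarrow> real" where
  "quad_form N M x = (\<Sum>i<N. \<Sum>j<N. M i j * x i * x j)"

definition symmetric_mat :: "nat \<Rightarrow> (nat \<Rightarrow> nat \<Rightarrow> real) \<Rightarrow> bool" where
  "symmetric_mat N M \<longleftrightarrow> (\<forall>i<N. \<forall>j<N. M i j = M j i)"

definition is_eigenpair :: "nat \<Rightarrow> (nat \<Rightarrow> nat \<Rightarrow> real) \<Rightarrow> (nat \<Rightarrow> real) \<Rightarrow> real \<Rightarrow> bool" where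
  "is_eigenpair N M x m \<longleftrightarrow> (\<forall>i<N. mat_vec N M x i = m * x i)"

definition orthonormal :: "nat \<Rightarrow> nat \<Rightarrow> (nat \<Rightarrow> nat \<Rightarrow> real) \<Rightarrow> bool" where
  "orthonormal N k u \<longleftrightarrow> (\<forall>j<k. \<forall>l<k. ip N (u j) (u l) = (if j = l then 1 else 0))"

definition orthogonal_to :: "nat \<Rightarrow> nat \<Rightarrow> (nat \<Rightarrow> nat \<Rightarrow> real) \<Rightarrow> (nat \<Rightarrow> real) \<Rightarrow> bool" where
  "orthogonal_to N k u x \<longleftrightarrow> (\<forall>j<k. ip N (u j) x = 0)"

definition perp_component :: "nat \<Rightarrow> nat \<Rightarrow> (nat \<Rightarrow> nat \<Rightarrow> real) \<Rightarrow> (nat \<Rightarrow> real) \<Rightarrow> nat \<Rightarrow> real" where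
  "perp_component N k u x = (\<lambda>i. x i - (\<Sum>j<k. ip N (u j) x * u j i))"

text \<open>Vectors are required to vanish beyond index \<open>N\<close>, which makes the sphere compact in the
  product topology on \<open>nat \<Rightarrow> real\<close>.\<close>

definition unit_sphere :: "nat \<Rightarrow> (nat \<Rightarrow> real) set" where
  "unit_sphere N = {x. (\<forall>i\<ge>N. x i = 0) \<and> ip N x x = 1}"

definition normalize_vec :: "nat \<Rightarrow> (nat \<Rightarrow> real) \<Rightarrow> nat \<Rightarrow> real" where
  "normalize_vec N y = (\<lambda>i. if i < N then y i / sqrt (ip N y y) else 0)"

lemma ip_commute: "ip N x y = ip N y x"
  by (simp add: ip_def mult_ac)

lemma ip_self_nonneg: "ip N x x \<ge> 0"
  unfolding ip_def by (intro sum_nonneg) simp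

lemma ip_self_eq_0D: "ip N x x = 0 \<Longrightarrow> i < N \<Longrightarrow> x i = 0"
proof -
  assume z: "ip N x x = 0" and i: "i < N"
  have "x i * x i \<le> ip N x x" unfolding ip_def by (rule member_le_sum) (use i in auto)
  then have "x i * x i = 0" using z zero_le_square[of "x i"] by linarith
  then show "x i = 0" by simp
qed

lemma ip_add_right: "ip N x (\<lambda>i. y i + t * z i) = ip N x y + t * ip N x z"
  unfolding ip_def by (simp add: algebra_simps sum.distrib sum_distrib_left)

lemma ip_add_left: "ip N (\<lambda>i. y i + t * z i) x = ip N y x + t * ip N z x"
  unfolding ip_def by (simp add: algebra_simps sum.distrib sum_distrib_left)

lemma ip_scale_right: "ip N x (\<lambda>i. t * z i) = t * ip N x z"
  unfolding ip_def by (simp add: algebra_simps sum_distrib_left)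

lemma ip_scale_left: "ip N (\<lambda>i. t * z i) x = t * ip N z x"
  unfolding ip_def by (simp add: algebra_simps sum_distrib_left)

lemma ip_diff_right: "ip N x (\<lambda>i. y i - z i) = ip N x y - ip N x z"
  unfolding ip_def by (simp add: algebra_simps sum_subtractf)

lemma ip_sum_right: "ip N x (\<lambda>i. \<Sum>j\<in>J. c j * f j i) = (\<Sum>j\<in>J. c j * ip N x (f j))"
  unfolding ip_def by (simp add: sum_distrib_left) (subst sum.swap, simp add: mult_ac)

lemma ip_basis_vec: "i < N \<Longrightarrow> ip N x (basis_vec i) = x i"
  unfolding ip_def basis_vec_def by (simp add: if_distrib cong: if_cong)

lemma ip_basis_vec_left: "i < N \<Longrightarrow> ip N (basis_vec i) x = x i"
  using ip_basis_vec ip_commute by metis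

lemma ip_cong_left: "(\<And>i. i < N \<Longrightarrow> x i = x' i) \<Longrightarrow> ip N x y = ip N x' y"
  unfolding ip_def by (rule sum.cong) auto

lemma ip_cong_right: "(\<And>i. i < N \<Longrightarrow> y i = y' i) \<Longrightarrow> ip N x y = ip N x y'"
  unfolding ip_def by (rule sum.cong) auto

lemma sum_basis_vec: "d < n \<Longrightarrow> (\<Sum>l<n. f l * basis_vec d l) = (f d::real)"
  unfolding basis_vec_def by (simp add: if_distrib sum.delta cong: if_cong)

lemma bilin_form_commute: "symmetric_mat N M \<Longrightarrow> bilin_form N M x y = bilin_form N M y x"
  unfolding bilin_form_def symmetric_mat_def
  by (subst sum.swap) (auto intro!: sum.cong simp: mult_ac)

lemma bilin_form_eq_ip: "bilin_form N M x y = ip N x (mat_vec N M y)"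
  unfolding bilin_form_def ip_def mat_vec_def by (simp add: sum_distrib_left mult_ac)

lemma quad_form_eq_bilin: "quad_form N M x = bilin_form N M x x"
  by (simp add: quad_form_def bilin_form_def)

lemma bilin_form_add_right: "bilin_form N M x (\<lambda>i. y i + t * z i) = bilin_form N M x y + t * bilin_form N M x z"
  unfolding bilin_form_def by (simp add: algebra_simps sum.distrib sum_distrib_left)

lemma bilin_form_add_left: "bilin_form N M (\<lambda>i. y i + t * z i) x = bilin_form N M y x + t * bilin_form N M z x"
  unfolding bilin_form_def by (simp add: algebra_simps sum.distrib sum_distrib_left)

lemma bilin_form_diff_right: "bilin_form N M x (\<lambda>i. y i - z i) = bilin_form N M x y - bilin_form N M x z"
  unfolding bilin_form_def by (simp add: algebra_simps sum_subtractf)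

lemma bilin_form_sum_right:
  "bilin_form N M x (\<lambda>i. \<Sum>j\<in>J. c j * f j i) = (\<Sum>j\<in>J. c j * bilin_form N M x (f j))"
  unfolding bilin_form_eq_ip mat_vec_def ip_def
  by (simp add: sum_distrib_left sum_distrib_right mult_ac)
    (subst sum.swap, rule sum.cong, simp, subst sum.swap, simp)

lemma bilin_form_basis_vec:
  assumes "symmetric_mat N M" "i < N"
  shows "bilin_form N M x (basis_vec i) = mat_vec N M x i"
  using assms bilin_form_commute[OF assms(1), of x]
  by (simp add: bilin_form_eq_ip ip_basis_vec_left)

lemma quad_form_add:
  assumes "symmetric_mat N M"
  shows "quad_form N M (\<lambda>i. x i + t * z i) = quad_form N M x + 2 * t * bilin_form N M x z + t\<^sup>2 * quad_form N M z"
  unfolding quad_form_eq_bilin bilin_form_add_left bilin_form_add_right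
  using bilin_form_commute[OF assms, of z x] by (simp add: algebra_simps power2_eq_square)

lemma quad_form_scale: "quad_form N M (\<lambda>i. t * x i) = t\<^sup>2 * quad_form N M x"
  unfolding quad_form_def by (simp add: sum_distrib_left power2_eq_square mult_ac)

lemma quad_form_cong: "(\<And>i. i < N \<Longrightarrow> x i = x' i) \<Longrightarrow> quad_form N M x = quad_form N M x'"
  unfolding quad_form_def by (intro sum.cong) auto

lemma quad_form_basis_vec: "j < N \<Longrightarrow> quad_form N M (basis_vec j) = M j j"
  unfolding quad_form_eq_bilin bilin_form_eq_ip by (simp add: ip_basis_vec_left mat_vec_def sum_basis_vec)

lemma sum_orthonormal_coeff:
  assumes "orthonormal N k u" "l < k"
  shows "(\<Sum>j<k. f j * ip N (u j) (u l)) = f l"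
proof -
  have "(\<Sum>j<k. f j * ip N (u j) (u l)) = (\<Sum>j<k. if j = l then f j else 0)"
    by (rule sum.cong) (use assms in \<open>auto simp: orthonormal_def\<close>)
  then show ?thesis using assms(2) by (simp add: sum.delta)
qed

lemma orthogonal_perp_component:
  assumes "orthonormal N k u" "l < k"
  shows "ip N (u l) (perp_component N k u x) = 0"
  unfolding perp_component_def ip_diff_right ip_sum_right
  using sum_orthonormal_coeff[OF assms, of "\<lambda>j. ip N (u j) x"] by (simp add: ip_commute)

lemma perp_component_basis_vec_self:
  assumes "orthonormal N k u" "i < N"
  shows "ip N (perp_component N k u (basis_vec i)) (perp_component N k u (basis_vec i)) = 1 - (\<Sum>j<k. (u j i)\<^sup>2)"
proof -
  let ?z = "perp_component N k u (basis_vec i)"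
  have z: "?z = (\<lambda>i'. basis_vec i i' - (\<Sum>j<k. u j i * u j i'))"
    unfolding perp_component_def using assms(2) by (simp add: ip_basis_vec mult.commute)
  have "ip N ?z ?z = ip N ?z (basis_vec i) - (\<Sum>j<k. u j i * ip N ?z (u j))"
    by (subst (2) z) (simp add: ip_diff_right ip_sum_right)
  also have "(\<Sum>j<k. u j i * ip N ?z (u j)) = 0"
    using orthogonal_perp_component[OF assms(1)] by (simp add: ip_commute)
  also have "ip N ?z (basis_vec i) = 1 - (\<Sum>j<k. (u j i)\<^sup>2)"
    using assms(2) by (simp add: ip_basis_vec z) (simp add: basis_vec_def power2_eq_square)
  finally show ?thesis by simp
qed

lemma linear_coeff_eq_0_if_quadratic_nonneg:
  fixes a b :: real
  assumes "\<And>t. 0 \<le> a * t + b * t\<^sup>2"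
  shows "a = 0"
proof (rule ccontr)
  assume a: "a \<noteq> 0"
  define s where "s = 1 / (\<bar>b\<bar> + 1)"
  have s: "s > 0" "b * s < 1" unfolding s_def by (auto simp: field_simps)
  have "a * (- a * s) + b * (- a * s)\<^sup>2 = a\<^sup>2 * s * (b * s - 1)"
    by (simp add: algebra_simps power2_eq_square)
  also have "\<dots> < 0" using a s by (intro mult_pos_neg) auto
  finally show False using assms[of "- a * s"] by simp
qed

subsection \<open>Variational construction of eigenvectors\<close>

lemma continuous_on_coordinate: "continuous_on S (\<lambda>x::nat \<Rightarrow> real. x i)"
  by (rule continuous_on_subset[OF continuous_on_product_coordinates]) simp

lemma compact_unit_sphere: "compact (unit_sphere N)"
proof -
  define K where "K = PiE UNIV (\<lambda>i::nat. if i < N then {-1..1::real} else {0})"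
  have "compactin (product_topology (\<lambda>i. euclidean) UNIV) K"
    unfolding K_def by (subst compactin_PiE) (auto simp: compactin_euclidean_iff)
  hence "compact K" by (simp add: euclidean_product_topology compactin_euclidean_iff)
  moreover have "closed {x. ip N x x = 1}"
    unfolding ip_def by (intro closed_Collect_eq continuous_on_sum continuous_on_mult continuous_on_const continuous_on_coordinate)
  moreover have "unit_sphere N = K \<inter> {x. ip N x x = 1}"
  proof (intro Set.set_eqI iffI)
    fix x assume x: "x \<in> unit_sphere N"
    have "x i \<in> (if i < N then {-1..1} else {0})" for i
    proof (cases "i < N")
      case True
      have "x i * x i \<le> ip N x x"
        unfolding ip_def by (rule member_le_sum) (use True in auto)
      hence "\<bar>x i\<bar> \<le> 1" using x abs_le_square_iff[of "x i" 1] by (simp add: unit_sphere_def power2_eq_square)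
      then show ?thesis using True by auto
    qed (use x in \<open>auto simp: unit_sphere_def\<close>)
    then show "x \<in> K \<inter> {x. ip N x x = 1}" using x by (auto simp: K_def unit_sphere_def)
  next
    fix x assume "x \<in> K \<inter> {x. ip N x x = 1}"
    then show "x \<in> unit_sphere N" unfolding K_def unit_sphere_def PiE_iff by (auto split: if_splits)
  qed
  ultimately show ?thesis using compact_Int_closed by simp
qed

lemma normalize_vec_in_unit_sphere: "ip N y y > 0 \<Longrightarrow> normalize_vec N y \<in> unit_sphere N"
  unfolding unit_sphere_def normalize_vec_def ip_def
  by (simp add: power2_eq_square[symmetric] power_divide sum_divide_distrib[symmetric])

lemma ip_normalize_vec_right: "ip N x (normalize_vec N y) = ip N x y / sqrt (ip N y y)"
  unfolding ip_def normalize_vec_def by (simp add: sum_divide_distrib)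

lemma quad_form_normalize_vec:
  "ip N y y > 0 \<Longrightarrow> quad_form N M (normalize_vec N y) = quad_form N M y / ip N y y"
proof -
  assume pos: "ip N y y > 0"
  have "quad_form N M (normalize_vec N y) = quad_form N M (\<lambda>i. (1 / sqrt (ip N y y)) * y i)"
    by (intro quad_form_cong) (simp add: normalize_vec_def)
  also have "\<dots> = (1 / sqrt (ip N y y))\<^sup>2 * quad_form N M y" by (rule quad_form_scale)
  finally show ?thesis using pos by (simp add: power_divide)
qed

lemma exists_unit_vector_orthogonal:
  assumes "orthonormal N k u" "k < N"
  obtains x where "x \<in> unit_sphere N" "orthogonal_to N k u x"
proof -
  let ?z = "\<lambda>i. perp_component N k u (basis_vec i)"
  have "(\<Sum>i<N. \<Sum>j<k. (u j i)\<^sup>2) = (\<Sum>j<k. ip N (u j) (u j))"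
    by (subst sum.swap) (simp add: ip_def power2_eq_square)
  also have "\<dots> = k" using assms(1) by (simp add: orthonormal_def)
  finally have "(\<Sum>i<N. ip N (?z i) (?z i)) = real N - real k"
    using perp_component_basis_vec_self[OF assms(1)] by (simp add: sum_subtractf)
  then have "\<not> (\<forall>i<N. ip N (?z i) (?z i) \<le> 0)"
    using assms(2) sum_nonpos[of "{..<N}" "\<lambda>i. ip N (?z i) (?z i)"] by auto
  then obtain i where "i < N" "ip N (?z i) (?z i) > 0" by (auto simp: not_le)
  show ?thesis
  proof
    show "normalize_vec N (?z i) \<in> unit_sphere N" by (rule normalize_vec_in_unit_sphere) fact
    show "orthogonal_to N k u (normalize_vec N (?z i))"
      using orthogonal_perp_component[OF assms(1)] ip_normalize_vec_right
      by (simp add: orthogonal_to_def)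
  qed
qed

lemma rayleigh_minimizer_exists:
  assumes "orthonormal N k u" "k < N"
  obtains x where "x \<in> unit_sphere N" "orthogonal_to N k u x"
    "\<And>y. orthogonal_to N k u y \<Longrightarrow> quad_form N M x * ip N y y \<le> quad_form N M y"
proof -
  define S where "S = unit_sphere N \<inter> {x. orthogonal_to N k u x}"
  have "{x. orthogonal_to N k u x} = (\<Inter>j<k. {x. ip N (u j) x = 0})"
    unfolding orthogonal_to_def by blast
  also have "closed \<dots>"
    unfolding ip_def
    by (intro closed_INT ballI closed_Collect_eq continuous_on_sum continuous_on_mult continuous_on_const continuous_on_coordinate)
  finally have "closed {x. orthogonal_to N k u x}" .
  then have "compact S" unfolding S_def using compact_unit_sphere compact_Int_closed by blast
  moreover obtain x0 where "x0 \<in> unit_sphere N" "orthogonal_to N k u x0"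
    using exists_unit_vector_orthogonal[OF assms] .
  then have "S \<noteq> {}" unfolding S_def by blast
  moreover have "continuous_on S (quad_form N M)"
    unfolding quad_form_def by (intro continuous_on_sum continuous_on_mult continuous_on_const continuous_on_coordinate)
  ultimately obtain x where x: "x \<in> S" and min: "\<And>y. y \<in> S \<Longrightarrow> quad_form N M x \<le> quad_form N M y"
    by (metis continuous_attains_inf)
  have "quad_form N M x * ip N y y \<le> quad_form N M y" if y: "orthogonal_to N k u y" for y
  proof (cases "ip N y y = 0")
    case True
    then have "quad_form N M y = quad_form N M (\<lambda>i. 0 * y i)"
      by (intro quad_form_cong) (simp add: ip_self_eq_0D)
    then show ?thesis using True quad_form_scale[of N M 0 y] by simp
  next
    case False
    then have pos: "ip N y y > 0" using ip_self_nonneg[of N y] by linarith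
    have "normalize_vec N y \<in> S"
      unfolding S_def using normalize_vec_in_unit_sphere[OF pos] y
      by (simp add: orthogonal_to_def ip_normalize_vec_right)
    then have "quad_form N M x \<le> quad_form N M (normalize_vec N y)" by (rule min)
    also have "\<dots> = quad_form N M y / ip N y y"
      using pos by (simp add: quad_form_normalize_vec)
    finally show ?thesis using pos by (simp add: field_simps)
  qed
  then show thesis using x that unfolding S_def by blast
qed

lemma rayleigh_minimizer_is_eigenpair:
  assumes sym: "symmetric_mat N M" and orth: "orthonormal N k u"
    and eig: "\<And>j. j < k \<Longrightarrow> is_eigenpair N M (u j) (\<mu> j)"
    and x: "orthogonal_to N k u x" "ip N x x = 1"
    and min: "\<And>y. orthogonal_to N k u y \<Longrightarrow> quad_form N M x * ip N y y \<le> quad_form N M y"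
  shows "is_eigenpair N M x (quad_form N M x)"
proof -
  define m where "m = quad_form N M x"
  have stationary: "bilin_form N M x z = m * ip N x z" if z: "orthogonal_to N k u z" for z
  proof -
    have "0 \<le> 2 * (bilin_form N M x z - m * ip N x z) * t + (quad_form N M z - m * ip N z z) * t\<^sup>2" for t
    proof -
      have "orthogonal_to N k u (\<lambda>i. x i + t * z i)"
        using x z by (simp add: orthogonal_to_def ip_add_right)
      then have "m * ip N (\<lambda>i. x i + t * z i) (\<lambda>i. x i + t * z i) \<le> quad_form N M (\<lambda>i. x i + t * z i)"
        unfolding m_def by (rule min)
      then show ?thesis using x(2)
        by (simp add: quad_form_add[OF sym] ip_add_left ip_add_right ip_commute[of N z x] m_def
            algebra_simps power2_eq_square)
    qed
    from linear_coeff_eq_0_if_quadratic_nonneg[OF this] show ?thesis by simp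
  qed
  have "mat_vec N M x i = m * x i" if i: "i < N" for i
  proof -
    define z where "z = perp_component N k u (basis_vec i)"
    have z_eq: "z = (\<lambda>i'. basis_vec i i' - (\<Sum>j<k. u j i * u j i'))"
      unfolding z_def perp_component_def using i by (simp add: ip_basis_vec mult.commute)
    have "bilin_form N M x (u j) = 0" if "j < k" for j
    proof -
      have "bilin_form N M x (u j) = ip N x (\<lambda>i. \<mu> j * u j i)"
        unfolding bilin_form_eq_ip using eig[OF that] by (intro ip_cong_right) (simp add: is_eigenpair_def)
      then show ?thesis using x(1) that by (simp add: ip_scale_right ip_commute orthogonal_to_def)
    qed
    then have "bilin_form N M x z = mat_vec N M x i"
      by (simp add: z_eq bilin_form_diff_right bilin_form_sum_right bilin_form_basis_vec[OF sym i])
    moreover have "ip N x z = x i"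
      using x(1) by (simp add: z_eq ip_diff_right ip_sum_right ip_basis_vec[OF i] ip_commute orthogonal_to_def)
    moreover have "orthogonal_to N k u z"
      unfolding z_def orthogonal_to_def using orthogonal_perp_component[OF orth] by blast
    ultimately show ?thesis using stationary by simp
  qed
  then show ?thesis unfolding is_eigenpair_def m_def by blast
qed

lemma orthonormal_extend:
  assumes "orthonormal N k u" "orthogonal_to N k u x" "ip N x x = 1"
  shows "orthonormal N (Suc k) (u(k := x))"
  unfolding orthonormal_def
proof (intro allI impI)
  fix j l assume "j < Suc k" "l < Suc k"
  then consider "j < k" "l < k" | "j = k" "l < k" | "j < k" "l = k" | "j = k" "l = k"
    by (auto simp: less_Suc_eq)
  then show "ip N ((u(k := x)) j) ((u(k := x)) l) = (if j = l then 1 else 0)"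
  proof cases
    case 2
    then show ?thesis using assms(2) ip_commute[of N x "u l"] by (simp add: orthogonal_to_def)
  qed (use assms in \<open>auto simp: orthonormal_def orthogonal_to_def\<close>)
qed

lemma orthonormal_eigenvectors_upto:
  assumes sym: "symmetric_mat N M"
  shows "k \<le> N \<Longrightarrow> \<exists>u \<mu>. orthonormal N k u \<and> (\<forall>j<k. is_eigenpair N M (u j) (\<mu> j)) \<and> mono_on {..<k} \<mu>
     \<and> (0 < k \<longrightarrow> (\<forall>y. orthogonal_to N k u y \<longrightarrow> \<mu> (k - 1) * ip N y y \<le> quad_form N M y))"
proof (induction k)
  case 0
  show ?case by (auto simp: orthonormal_def mono_on_def)
next
  case (Suc k)
  then obtain u \<mu> where orth: "orthonormal N k u" and eig: "\<forall>j<k. is_eigenpair N M (u j) (\<mu> j)"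
    and mono: "mono_on {..<k} \<mu>"
    and last: "0 < k \<longrightarrow> (\<forall>y. orthogonal_to N k u y \<longrightarrow> \<mu> (k - 1) * ip N y y \<le> quad_form N M y)"
    by auto
  obtain x where x: "x \<in> unit_sphere N" "orthogonal_to N k u x"
    and min: "\<And>y. orthogonal_to N k u y \<Longrightarrow> quad_form N M x * ip N y y \<le> quad_form N M y"
    using rayleigh_minimizer_exists[OF orth] Suc.prems by (metis Suc_le_lessD)
  have x1: "ip N x x = 1" using x(1) by (simp add: unit_sphere_def)
  define m where "m = quad_form N M x"
  have "is_eigenpair N M x m"
    unfolding m_def using sym orth eig x(2) x1 min by (intro rayleigh_minimizer_is_eigenpair) auto
  then have "\<forall>j<Suc k. is_eigenpair N M ((u(k := x)) j) ((\<mu>(k := m)) j)"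
    using eig by (simp add: less_Suc_eq)
  moreover have "mono_on {..<Suc k} (\<mu>(k := m))"
  proof (rule mono_onI)
    fix r s assume "r \<in> {..<Suc k}" "s \<in> {..<Suc k}" "r \<le> s"
    then consider "s < k" | "r < k" "s = k" | "r = k" "s = k" by fastforce
    then show "(\<mu>(k := m)) r \<le> (\<mu>(k := m)) s"
    proof cases
      case 1
      then show ?thesis using mono_onD[OF mono] \<open>r \<le> s\<close> by simp
    next
      case 2
      then have "\<mu> r \<le> \<mu> (k - 1)" by (intro mono_onD[OF mono]) auto
      also have "\<mu> (k - 1) \<le> m" using 2 last x(2) x1 by (auto simp: m_def)
      finally show ?thesis using 2 by simp
    qed simp
  qed
  moreover have "(\<mu>(k := m)) (Suc k - 1) * ip N y y \<le> quad_form N M y"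
    if "orthogonal_to N (Suc k) (u(k := x)) y" for y
  proof -
    have "orthogonal_to N k u y"
      using that unfolding orthogonal_to_def by (metis fun_upd_other less_SucI less_irrefl_nat)
    then show ?thesis using min by (simp add: m_def)
  qed
  ultimately show ?case using orthonormal_extend[OF orth x(2) x1] by blast
qed

theorem symmetric_mat_orthonormal_eigenbasis:
  assumes "symmetric_mat N M"
  obtains u \<mu> where "orthonormal N N u" "\<And>j. j < N \<Longrightarrow> is_eigenpair N M (u j) (\<mu> j)" "mono_on {..<N} \<mu>"
  using orthonormal_eigenvectors_upto[OF assms order_refl] by blast

lemma mat_mult_entry:
  assumes "i < n" "j < n"
  shows "(Matrix.mat n n f * Matrix.mat n n g) $$ (i,j) = (\<Sum>l<n. f (i,l) * g (l,j))"
  using assms by (simp add: scalar_prod_def atLeast0LessThan)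

lemma proots_prod_linear_factors: "proots (\<Prod>a\<leftarrow>xs. [:- a, 1:]) = mset (xs::real list)"
proof (induction xs)
  case (Cons a xs)
  have nz: "(\<Prod>a\<leftarrow>xs. [:- a, 1:]) \<noteq> 0" by (auto simp: prod_list_zero_iff)
  have "proots (\<Prod>a\<leftarrow>a # xs. [:- a, 1:]) = proots [:- a, 1:] + proots (\<Prod>a\<leftarrow>xs. [:- a, 1:])"
    unfolding prod_list.Cons list.map by (rule proots_mult[OF _ nz]) simp
  also have "proots [:- a, 1:] = {#a#}" using proots_linear_factor[of "-a"] by simp
  finally show ?case using Cons by simp
qed simp

text \<open>The weights are at most \<open>s\<close> and add up to at least \<open>2 s\<close>, so the weighted sum can only
  decrease when all weight is moved onto the two smallest eigenvalues, weight \<open>s\<close> each.\<close>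

lemma weighted_sum_nonneg_if_two_smallest_nonneg:
  fixes \<mu> C :: "nat \<Rightarrow> real"
  assumes N: "2 \<le> N" and mono: "mono_on {..<N} \<mu>" and \<mu>01: "0 \<le> \<mu> 0 + \<mu> 1"
    and C: "\<And>k. k < N \<Longrightarrow> 0 \<le> C k \<and> C k \<le> s" and S: "2 * s \<le> (\<Sum>k<N. C k)"
  shows "0 \<le> (\<Sum>k<N. \<mu> k * C k)"
proof -
  obtain N' where N': "N = Suc N'" using N by (cases N) auto
  have s0: "s \<ge> 0" using C[of 0] N by auto
  have \<mu>_le: "\<mu> 1 \<le> \<mu> (Suc k)" if "k < N'" for k
    using that N' by (intro mono_onD[OF mono]) auto
  have "\<mu> 0 \<le> \<mu> 1" using N by (intro mono_onD[OF mono]) auto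
  then have \<mu>1: "\<mu> 1 \<ge> 0" using \<mu>01 by linarith
  have "(\<Sum>k<N'. \<mu> 1 * C (Suc k)) \<le> (\<Sum>k<N'. \<mu> (Suc k) * C (Suc k))"
    using C N' by (intro sum_mono mult_right_mono \<mu>_le) auto
  moreover have "(\<Sum>k<N. \<mu> k * C k) = \<mu> 0 * C 0 + (\<Sum>k<N'. \<mu> (Suc k) * C (Suc k))"
    unfolding N' by (rule sum.lessThan_Suc_shift)
  moreover have "(\<Sum>k<N. C k) = C 0 + (\<Sum>k<N'. C (Suc k))"
    unfolding N' by (rule sum.lessThan_Suc_shift)
  ultimately have "(\<Sum>k<N. \<mu> k * C k) \<ge> \<mu> 0 * C 0 + \<mu> 1 * ((\<Sum>k<N. C k) - C 0)"
    by (simp add: sum_distrib_left)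
  moreover have "\<mu> 1 * ((\<Sum>k<N. C k) - C 0) \<ge> \<mu> 1 * (2 * s - C 0)"
    using \<mu>1 S by (intro mult_left_mono) auto
  moreover have "(\<mu> 0 - \<mu> 1) * C 0 \<ge> (\<mu> 0 - \<mu> 1) * s"
    using C[of 0] N \<open>\<mu> 0 \<le> \<mu> 1\<close> by (intro mult_left_mono_neg) auto
  ultimately have "(\<Sum>k<N. \<mu> k * C k) \<ge> s * (\<mu> 0 + \<mu> 1)" by (simp add: algebra_simps)
  moreover have "s * (\<mu> 0 + \<mu> 1) \<ge> 0" using s0 \<mu>01 by simp
  ultimately show ?thesis by linarith
qed

definition mat_of_entries :: "nat \<Rightarrow> (nat \<Rightarrow> nat \<Rightarrow> 'a) \<Rightarrow> 'a mat" where
  "mat_of_entries N M = Matrix.mat N N (\<lambda>(i, j). M i j)"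

locale orthonormal_eigenbasis =
  fixes N :: nat and M :: "nat \<Rightarrow> nat \<Rightarrow> real" and u :: "nat \<Rightarrow> nat \<Rightarrow> real" and \<mu> :: "nat \<Rightarrow> real"
  assumes orth: "orthonormal N N u"
    and eig: "\<And>j. j < N \<Longrightarrow> is_eigenpair N M (u j) (\<mu> j)"
begin

definition U :: "real mat" where "U = Matrix.mat N N (\<lambda>(i, k). u k i)"
definition U\<^sub>T :: "real mat" where "U\<^sub>T = Matrix.mat N N (\<lambda>(k, i). u k i)"
definition D :: "real mat" where "D = Matrix.mat N N (\<lambda>(i, j). if i = j then \<mu> i else 0)"

lemma transpose_mult_U: "U\<^sub>T * U = 1\<^sub>m N"
proof (rule eq_matI)
  fix i j assume "i < dim_row (1\<^sub>m N)" "j < dim_col (1\<^sub>m N)"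
  then have ij: "i < N" "j < N" by auto
  have "(U\<^sub>T * U) $$ (i, j) = ip N (u i) (u j)"
    unfolding U\<^sub>T_def U_def ip_def by (subst mat_mult_entry) (use ij in auto)
  then show "(U\<^sub>T * U) $$ (i, j) = 1\<^sub>m N $$ (i, j)" using orth ij by (simp add: orthonormal_def)
qed (auto simp: U\<^sub>T_def U_def)

lemma U_mult_transpose: "U * U\<^sub>T = 1\<^sub>m N"
  by (rule mat_mult_left_right_inverse[OF _ _ transpose_mult_U]) (auto simp: U\<^sub>T_def U_def)

lemma eigenvectors_complete: "i < N \<Longrightarrow> j < N \<Longrightarrow> (\<Sum>k<N. u k i * u k j) = (if i = j then 1 else 0)"
proof -
  assume ij: "i < N" "j < N"
  have "(U * U\<^sub>T) $$ (i, j) = (\<Sum>k<N. u k i * u k j)"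
    unfolding U\<^sub>T_def U_def by (subst mat_mult_entry) (use ij in auto)
  then show ?thesis using U_mult_transpose ij by simp
qed

lemma eigen_expansion: "i < N \<Longrightarrow> (\<Sum>k<N. ip N (u k) x * u k i) = x i"
proof -
  assume i: "i < N"
  have "(\<Sum>k<N. ip N (u k) x * u k i) = (\<Sum>l<N. x l * (\<Sum>k<N. u k l * u k i))"
    unfolding ip_def by (simp add: sum_distrib_left sum_distrib_right mult_ac) (rule sum.swap)
  also have "\<dots> = (\<Sum>l<N. if l = i then x l else 0)"
    by (rule sum.cong) (use i eigenvectors_complete in auto)
  finally show ?thesis using i by (simp add: sum.delta)
qed

lemma parseval: "(\<Sum>k<N. (ip N (u k) x)\<^sup>2) = ip N x x"
proof -
  have "ip N x x = ip N x (\<lambda>i. \<Sum>k<N. ip N (u k) x * u k i)"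
    by (rule ip_cong_right) (simp add: eigen_expansion)
  also have "\<dots> = (\<Sum>k<N. ip N (u k) x * ip N x (u k))" by (rule ip_sum_right)
  finally show ?thesis by (simp add: ip_commute power2_eq_square)
qed

lemma mat_vec_eigen_expansion: "i < N \<Longrightarrow> mat_vec N M x i = (\<Sum>k<N. \<mu> k * ip N (u k) x * u k i)"
proof -
  assume i: "i < N"
  have "mat_vec N M x i = (\<Sum>l<N. M i l * (\<Sum>k<N. ip N (u k) x * u k l))"
    unfolding mat_vec_def using eigen_expansion by (intro sum.cong) auto
  also have "\<dots> = (\<Sum>k<N. ip N (u k) x * mat_vec N M (u k) i)"
    unfolding mat_vec_def by (simp add: sum_distrib_left sum_distrib_right mult_ac) (rule sum.swap)
  also have "\<dots> = (\<Sum>k<N. \<mu> k * ip N (u k) x * u k i)"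
    using eig i by (intro sum.cong) (auto simp: is_eigenpair_def)
  finally show ?thesis .
qed

lemma quad_form_eigen_expansion: "quad_form N M x = (\<Sum>k<N. \<mu> k * (ip N (u k) x)\<^sup>2)"
proof -
  have "quad_form N M x = ip N x (\<lambda>i. \<Sum>k<N. \<mu> k * ip N (u k) x * u k i)"
    unfolding quad_form_eq_bilin bilin_form_eq_ip by (rule ip_cong_right) (simp add: mat_vec_eigen_expansion)
  also have "\<dots> = (\<Sum>k<N. (\<mu> k * ip N (u k) x) * ip N x (u k))" by (rule ip_sum_right)
  finally show ?thesis by (simp add: ip_commute power2_eq_square mult_ac)
qed

lemma diagonalization: "mat_of_entries N M = U * D * U\<^sub>T"
proof (rule eq_matI)
  fix i j assume "i < dim_row (U * D * U\<^sub>T)" "j < dim_col (U * D * U\<^sub>T)"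
  then have ij: "i < N" "j < N" by (auto simp: U_def U\<^sub>T_def)
  have UD: "U * D = Matrix.mat N N (\<lambda>(i, k). u k i * \<mu> k)"
  proof (rule eq_matI)
    fix a b assume "a < dim_row (Matrix.mat N N (\<lambda>(i, k). u k i * \<mu> k))"
      "b < dim_col (Matrix.mat N N (\<lambda>(i, k). u k i * \<mu> k))"
    then have ab: "a < N" "b < N" by auto
    have "(U * D) $$ (a, b) = (\<Sum>l<N. u l a * (if l = b then \<mu> l else 0))"
      unfolding U_def D_def by (subst mat_mult_entry) (use ab in auto)
    also have "\<dots> = u b a * \<mu> b" using ab by (simp add: if_distrib sum.delta' cong: if_cong)
    finally show "(U * D) $$ (a, b) = Matrix.mat N N (\<lambda>(i, k). u k i * \<mu> k) $$ (a, b)" using ab by simp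
  qed (auto simp: U_def D_def)
  have "(U * D * U\<^sub>T) $$ (i, j) = (\<Sum>k<N. u k i * \<mu> k * u k j)"
    unfolding UD U\<^sub>T_def by (subst mat_mult_entry) (use ij in auto)
  also have "\<dots> = (\<Sum>k<N. \<mu> k * ip N (u k) (basis_vec j) * u k i)"
    using ij by (intro sum.cong) (auto simp: ip_basis_vec mult_ac)
  also have "\<dots> = mat_vec N M (basis_vec j) i" using mat_vec_eigen_expansion ij by simp
  also have "\<dots> = M i j" using ij by (simp add: mat_vec_def mult.commute sum_basis_vec)
  finally show "mat_of_entries N M $$ (i, j) = (U * D * U\<^sub>T) $$ (i, j)" using ij by (simp add: mat_of_entries_def)
qed (auto simp: mat_of_entries_def U_def U\<^sub>T_def)

lemma proots_char_poly: "proots (char_poly (mat_of_entries N M)) = mset (map \<mu> [0..<N])"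
proof -
  have "similar_mat_wit (mat_of_entries N M) D U U\<^sub>T"
    unfolding similar_mat_wit_def Let_def using diagonalization U_mult_transpose transpose_mult_U
    by (auto simp: mat_of_entries_def D_def U_def U\<^sub>T_def)
  then have "char_poly (mat_of_entries N M) = char_poly D" by (intro char_poly_similar) (auto simp: similar_mat_def)
  also have "\<dots> = (\<Prod>a\<leftarrow>diag_mat D. [:- a, 1:])"
    by (rule char_poly_upper_triangular[of D N]) (auto simp: D_def Matrix.upper_triangular_def)
  also have "diag_mat D = map \<mu> [0..<N]" by (simp add: diag_mat_def D_def)
  finally show ?thesis by (simp only: proots_prod_linear_factors)
qed

lemma weighted_quad_form_sum_nonneg:
  assumes N: "2 \<le> N" and mono: "mono_on {..<N} \<mu>" and \<mu>01: "0 \<le> \<mu> 0 + \<mu> 1"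
    and T: "finite T" and c: "\<And>t. t \<in> T \<Longrightarrow> 0 \<le> c t"
    and up: "\<And>k. k < N \<Longrightarrow> (\<Sum>t\<in>T. c t * (ip N (u k) (w t))\<^sup>2) \<le> s"
    and total: "2 * s \<le> (\<Sum>t\<in>T. c t * ip N (w t) (w t))"
  shows "0 \<le> (\<Sum>t\<in>T. c t * quad_form N M (w t))"
proof -
  define C where "C = (\<lambda>k. \<Sum>t\<in>T. c t * (ip N (u k) (w t))\<^sup>2)"
  have "(\<Sum>t\<in>T. c t * quad_form N M (w t)) = (\<Sum>t\<in>T. \<Sum>k<N. \<mu> k * (c t * (ip N (u k) (w t))\<^sup>2))"
    unfolding quad_form_eigen_expansion by (simp add: sum_distrib_left mult_ac)
  also have "\<dots> = (\<Sum>k<N. \<mu> k * C k)" unfolding C_def by (subst sum.swap) (simp add: sum_distrib_left)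
  finally have e: "(\<Sum>t\<in>T. c t * quad_form N M (w t)) = (\<Sum>k<N. \<mu> k * C k)" .
  have "(\<Sum>k<N. C k) = (\<Sum>t\<in>T. c t * (\<Sum>k<N. (ip N (u k) (w t))\<^sup>2))"
    unfolding C_def by (subst sum.swap) (simp add: sum_distrib_left)
  also have "\<dots> = (\<Sum>t\<in>T. c t * ip N (w t) (w t))" by (simp add: parseval)
  finally have S: "2 * s \<le> (\<Sum>k<N. C k)" using total by simp
  have "0 \<le> C k \<and> C k \<le> s" if "k < N" for k
    using up[OF that] c unfolding C_def by (auto intro!: sum_nonneg)
  then show ?thesis unfolding e by (rule weighted_sum_nonneg_if_two_smallest_nonneg[OF N mono \<mu>01 _ S])
qed

end

section \<open>Curvature tensors acting on 2-forms\<close>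

text \<open>A 2-form is an antisymmetric matrix \<open>X\<close>; \<open>e\<^sub>i \<and> e\<^sub>j\<close> is \<open>wedge (basis_vec i) (basis_vec j)\<close>.
  The factor \<open>1/4\<close> makes \<open>curv_form n Rm (e\<^sub>i \<and> e\<^sub>j) (e\<^sub>k \<and> e\<^sub>l) = Rm i j k l\<close>, so \<open>curv_form\<close> is the
  bilinear form of the curvature operator.\<close>

definition curv_form ::
    "nat \<Rightarrow> (nat \<Rightarrow> nat \<Rightarrow> nat \<Rightarrow> nat \<Rightarrow> real) \<Rightarrow> (nat \<Rightarrow> nat \<Rightarrow> real) \<Rightarrow> (nat \<Rightarrow> nat \<Rightarrow> real) \<Rightarrow> real" where
  "curv_form n Rm X Y = (\<Sum>p<n. \<Sum>q<n. \<Sum>r<n. \<Sum>s<n. Rm p q r s * X p q * Y r s) / 4"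

definition wedge :: "(nat \<Rightarrow> real) \<Rightarrow> (nat \<Rightarrow> real) \<Rightarrow> nat \<Rightarrow> nat \<Rightarrow> real" where
  "wedge x y = (\<lambda>p q. x p * y q - x q * y p)"

definition basis_wedge :: "nat \<Rightarrow> nat \<Rightarrow> nat \<Rightarrow> nat \<Rightarrow> real" where
  "basis_wedge a b = wedge (basis_vec a) (basis_vec b)"

definition cyclic_wedge :: "(nat \<Rightarrow> real) \<Rightarrow> nat \<Rightarrow> nat \<Rightarrow> nat \<Rightarrow> nat \<Rightarrow> nat \<Rightarrow> real" where
  "cyclic_wedge v i j k =
     (\<lambda>p q. v i * basis_wedge j k p q + v j * basis_wedge k i p q + v k * basis_wedge i j p q)"

definition ricci_quad :: "nat \<Rightarrow> (nat \<Rightarrow> nat \<Rightarrow> nat \<Rightarrow> nat \<Rightarrow> real) \<Rightarrow> (nat \<Rightarrow> real) \<Rightarrow> real" where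
  "ricci_quad n Rm v = (\<Sum>j<n. \<Sum>k<n. ricci n Rm j k * v j * v k)"

definition has_pair_symmetries :: "nat \<Rightarrow> (nat \<Rightarrow> nat \<Rightarrow> nat \<Rightarrow> nat \<Rightarrow> real) \<Rightarrow> bool" where
  "has_pair_symmetries n Rm \<longleftrightarrow>
     (\<forall>i<n. \<forall>j<n. \<forall>k<n. \<forall>l<n. Rm i j k l = - Rm j i k l \<and> Rm i j k l = Rm k l i j)"

lemma alg_curv_tensor_pair_symmetries: "alg_curv_tensor n Rm \<Longrightarrow> has_pair_symmetries n Rm"
  unfolding alg_curv_tensor_def has_pair_symmetries_def by blast

lemma sum_wedge_antisym:
  fixes f :: "nat \<Rightarrow> nat \<Rightarrow> real"
  assumes "\<And>p q. p < n \<Longrightarrow> q < n \<Longrightarrow> f p q = - f q p"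
  shows "(\<Sum>p<n. \<Sum>q<n. f p q * wedge x y p q) = 2 * (\<Sum>p<n. \<Sum>q<n. f p q * x p * y q)"
proof -
  have "(\<Sum>p<n. \<Sum>q<n. f p q * x q * y p) = (\<Sum>q<n. \<Sum>p<n. f p q * x q * y p)" by (rule sum.swap)
  also have "\<dots> = (\<Sum>q<n. \<Sum>p<n. - (f q p * x q * y p))"
  proof (intro sum.cong refl)
    fix q p assume "q \<in> {..<n}" "p \<in> {..<n}"
    then show "f p q * x q * y p = - (f q p * x q * y p)" using assms[of p q] by simp
  qed
  also have "\<dots> = - (\<Sum>p<n. \<Sum>q<n. f p q * x p * y q)"
    by (simp add: sum_negf)
  finally show ?thesis unfolding wedge_def by (simp add: algebra_simps sum_subtractf)
qed

lemma curv_form_linear_left: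
  "curv_form n Rm (\<lambda>p q. a * X p q + b * Y p q + c * Z p q) W =
     a * curv_form n Rm X W + b * curv_form n Rm Y W + c * curv_form n Rm Z W"
  unfolding curv_form_def by (simp add: algebra_simps sum.distrib sum_distrib_left add_divide_distrib)

lemma curv_form_linear_right:
  "curv_form n Rm W (\<lambda>p q. a * X p q + b * Y p q + c * Z p q) =
     a * curv_form n Rm W X + b * curv_form n Rm W Y + c * curv_form n Rm W Z"
  unfolding curv_form_def by (simp add: algebra_simps sum.distrib sum_distrib_left add_divide_distrib)

lemma curv4_basis_vec:
  assumes "a < n" "b < n" "c < n" "d < n"
  shows "curv4 n Rm (basis_vec a) (basis_vec b) (basis_vec c) (basis_vec d) = Rm a b c d"
  unfolding curv4_def
  by (simp only: sum_basis_vec[OF assms(4)] sum_basis_vec[OF assms(3)] sum_basis_vec[OF assms(2)]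
      sum_basis_vec[OF assms(1)])

lemma curv4_scale:
  "curv4 n Rm (\<lambda>i. a * x i) (\<lambda>i. b * y i) (\<lambda>i. a * x i) (\<lambda>i. b * y i) = (a * b)\<^sup>2 * curv4 n Rm x y x y"
  unfolding curv4_def by (simp add: sum_distrib_left mult_ac power2_eq_square)

lemma curv4_zero_first: "(\<And>i. i < n \<Longrightarrow> x i = 0) \<Longrightarrow> curv4 n Rm x y z w = 0"
  unfolding curv4_def by (intro sum.neutral) auto

lemma curv4_zero_second: "(\<And>i. i < n \<Longrightarrow> y i = 0) \<Longrightarrow> curv4 n Rm x y z w = 0"
  unfolding curv4_def by (intro sum.neutral ballI) (simp add: sum.neutral)

lemma ricci_quad_eq_sum_curv4: "ricci_quad n Rm v = (\<Sum>i<n. curv4 n Rm (basis_vec i) v (basis_vec i) v)"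
proof -
  have nested: "curv4 n Rm x y z w = ip n x (\<lambda>a. ip n y (\<lambda>b. ip n z (\<lambda>c. ip n w (\<lambda>d. Rm a b c d))))"
    for x y z w
    unfolding curv4_def ip_def by (simp add: sum_distrib_left mult_ac)
  have "(\<Sum>i<n. curv4 n Rm (basis_vec i) v (basis_vec i) v) = (\<Sum>i<n. ip n v (\<lambda>b. ip n v (\<lambda>d. Rm i b i d)))"
    by (intro sum.cong refl) (simp add: nested ip_basis_vec_left)
  also have "\<dots> = (\<Sum>i<n. \<Sum>j<n. \<Sum>k<n. Rm i j i k * v j * v k)"
    unfolding ip_def by (simp add: sum_distrib_left mult_ac)
  also have "\<dots> = (\<Sum>j<n. \<Sum>k<n. \<Sum>i<n. Rm i j i k * v j * v k)"
    by (subst sum.swap) (rule sum.cong[OF refl], rule sum.swap)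
  finally show ?thesis unfolding ricci_quad_def ricci_def by (simp add: sum_distrib_right)
qed

lemma scal_eq_sum_sectional: "scal n Rm = (\<Sum>j<n. \<Sum>k<n. Rm j k j k)"
  unfolding scal_def ricci_def by (rule sum.swap)

lemma sum_cyclic_square_terms:
  "(\<Sum>i<n. \<Sum>j<n. \<Sum>k<n. (v i)\<^sup>2 * Rm j k j k) + (\<Sum>i<n. \<Sum>j<n. \<Sum>k<n. (v j)\<^sup>2 * Rm k i k i)
     + (\<Sum>i<n. \<Sum>j<n. \<Sum>k<n. (v k)\<^sup>2 * Rm i j i j) = 3 * ip n v v * scal n Rm"
proof -
  let ?S = "\<lambda>f. (\<Sum>i<n. \<Sum>j<n. \<Sum>k<n. (f i j k::real))"
  have s1: "?S (\<lambda>i j k. (v i)\<^sup>2 * Rm j k j k) = ip n v v * scal n Rm"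
  proof -
    have "ip n v v * scal n Rm = (\<Sum>i<n. (v i)\<^sup>2 * (\<Sum>j<n. \<Sum>k<n. Rm j k j k))"
      unfolding scal_eq_sum_sectional ip_def by (simp add: sum_distrib_right power2_eq_square)
    then show ?thesis by (simp add: sum_distrib_left)
  qed
  have s2: "?S (\<lambda>i j k. (v j)\<^sup>2 * Rm k i k i) = ip n v v * scal n Rm"
  proof -
    have "?S (\<lambda>i j k. (v j)\<^sup>2 * Rm k i k i) = (\<Sum>j<n. \<Sum>i<n. \<Sum>k<n. (v j)\<^sup>2 * Rm k i k i)" by (rule sum.swap)
    also have "\<dots> = ip n v v * (\<Sum>i<n. \<Sum>k<n. Rm k i k i)"
    proof -
      have "ip n v v * (\<Sum>i<n. \<Sum>k<n. Rm k i k i) = (\<Sum>j<n. (v j)\<^sup>2 * (\<Sum>i<n. \<Sum>k<n. Rm k i k i))"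
        unfolding ip_def by (simp add: sum_distrib_right power2_eq_square)
      then show ?thesis by (simp add: sum_distrib_left)
    qed
    also have "(\<Sum>i<n. \<Sum>k<n. Rm k i k i) = scal n Rm" unfolding scal_def ricci_def ..
    finally show ?thesis .
  qed
  have s3: "?S (\<lambda>i j k. (v k)\<^sup>2 * Rm i j i j) = ip n v v * scal n Rm"
  proof -
    have "?S (\<lambda>i j k. (v k)\<^sup>2 * Rm i j i j) = (\<Sum>i<n. \<Sum>k<n. \<Sum>j<n. (v k)\<^sup>2 * Rm i j i j)"
      by (rule sum.cong[OF refl], rule sum.swap)
    also have "\<dots> = (\<Sum>k<n. \<Sum>i<n. \<Sum>j<n. (v k)\<^sup>2 * Rm i j i j)" by (rule sum.swap)
    also have "\<dots> = ip n v v * (\<Sum>i<n. \<Sum>j<n. Rm i j i j)"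
    proof -
      have "ip n v v * (\<Sum>i<n. \<Sum>j<n. Rm i j i j) = (\<Sum>k<n. (v k)\<^sup>2 * (\<Sum>i<n. \<Sum>j<n. Rm i j i j))"
        unfolding ip_def by (simp add: sum_distrib_right power2_eq_square)
      then show ?thesis by (simp add: sum_distrib_left)
    qed
    also have "(\<Sum>i<n. \<Sum>j<n. Rm i j i j) = scal n Rm" unfolding scal_eq_sum_sectional ..
    finally show ?thesis .
  qed
  show ?thesis unfolding s1 s2 s3 by simp
qed

context
  fixes n :: nat and Rm :: "nat \<Rightarrow> nat \<Rightarrow> nat \<Rightarrow> nat \<Rightarrow> real"
  assumes pair_sym: "has_pair_symmetries n Rm"
begin

lemma antisym_first_pair: "i < n \<Longrightarrow> j < n \<Longrightarrow> k < n \<Longrightarrow> l < n \<Longrightarrow> Rm i j k l = - Rm j i k l"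
  using pair_sym unfolding has_pair_symmetries_def by blast

lemma pair_exchange: "i < n \<Longrightarrow> j < n \<Longrightarrow> k < n \<Longrightarrow> l < n \<Longrightarrow> Rm i j k l = Rm k l i j"
  using pair_sym unfolding has_pair_symmetries_def by blast

lemma antisym_second_pair: "i < n \<Longrightarrow> j < n \<Longrightarrow> k < n \<Longrightarrow> l < n \<Longrightarrow> Rm i j k l = - Rm i j l k"
  using antisym_first_pair pair_exchange by metis

lemma symmetric_ricci: "symmetric_mat n (ricci n Rm)"
  unfolding symmetric_mat_def ricci_def using pair_exchange by (auto intro!: sum.cong)

lemma curv_form_wedge: "curv_form n Rm (wedge x y) (wedge z w) = curv4 n Rm x y z w"
proof -
  define Rzw where "Rzw p q = (\<Sum>r<n. \<Sum>s<n. Rm p q r s * z r * w s)" for p q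
  have inner: "(\<Sum>r<n. \<Sum>s<n. Rm p q r s * wedge x y p q * wedge z w r s) = 2 * (Rzw p q * wedge x y p q)"
    if pq: "p < n" "q < n" for p q
  proof -
    have "Rm p q r s * wedge x y p q = - (Rm p q s r * wedge x y p q)" if "r < n" "s < n" for r s
      using antisym_second_pair[of p q r s] pq that by simp
    then have "(\<Sum>r<n. \<Sum>s<n. Rm p q r s * wedge x y p q * wedge z w r s)
        = 2 * (\<Sum>r<n. \<Sum>s<n. Rm p q r s * wedge x y p q * z r * w s)"
      by (rule sum_wedge_antisym[where f = "\<lambda>r s. Rm p q r s * wedge x y p q"])
    then show ?thesis unfolding Rzw_def by (simp add: sum_distrib_left sum_distrib_right mult_ac)
  qed
  have Rzw_antisym: "Rzw p q = - Rzw q p" if "p < n" "q < n" for p q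
  proof -
    have "Rzw p q = (\<Sum>r<n. \<Sum>s<n. - (Rm q p r s * z r * w s))"
      unfolding Rzw_def by (intro sum.cong refl) (simp add: antisym_first_pair[of p q] that)
    then show ?thesis by (simp add: sum_negf Rzw_def)
  qed
  have "4 * curv_form n Rm (wedge x y) (wedge z w)
      = (\<Sum>p<n. \<Sum>q<n. \<Sum>r<n. \<Sum>s<n. Rm p q r s * wedge x y p q * wedge z w r s)"
    unfolding curv_form_def by simp
  also have "\<dots> = (\<Sum>p<n. \<Sum>q<n. 2 * (Rzw p q * wedge x y p q))"
    by (intro sum.cong refl inner) auto
  also have "\<dots> = 2 * (\<Sum>p<n. \<Sum>q<n. Rzw p q * wedge x y p q)"
    by (simp add: sum_distrib_left)
  also have "\<dots> = 4 * (\<Sum>p<n. \<Sum>q<n. Rzw p q * x p * y q)"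
    using sum_wedge_antisym[where f = Rzw, OF Rzw_antisym] by simp
  also have "\<dots> = 4 * curv4 n Rm x y z w"
    unfolding curv4_def Rzw_def by (simp add: sum_distrib_left sum_distrib_right mult_ac)
  finally show ?thesis by simp
qed

lemma curv_form_basis_wedge:
  "a < n \<Longrightarrow> b < n \<Longrightarrow> c < n \<Longrightarrow> d < n \<Longrightarrow> curv_form n Rm (basis_wedge a b) (basis_wedge c d) = Rm a b c d"
  unfolding basis_wedge_def curv_form_wedge by (rule curv4_basis_vec)

lemma curv4_add_multiple: "curv4 n Rm x (\<lambda>i. y i + t * x i) x (\<lambda>i. y i + t * x i) = curv4 n Rm x y x y"
proof -
  have "wedge x (\<lambda>i. y i + t * x i) = wedge x y"
    unfolding wedge_def by (intro ext) (simp add: algebra_simps)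
  then show ?thesis
    using curv_form_wedge[of x y x y] curv_form_wedge[of x "\<lambda>i. y i + t * x i" x "\<lambda>i. y i + t * x i"]
    by simp
qed

lemma curv_form_cyclic_wedge: assumes "i < n" "j < n" "k < n"
  shows "curv_form n Rm (cyclic_wedge v i j k) (cyclic_wedge v i j k) = (v i)\<^sup>2 * Rm j k j k + (v j)\<^sup>2 * Rm k i k i + (v k)\<^sup>2 * Rm i j i j
     + 2 * v i * v j * Rm j k k i + 2 * v i * v k * Rm j k i j + 2 * v j * v k * Rm k i i j"
proof -
  have "curv_form n Rm (cyclic_wedge v i j k) (cyclic_wedge v i j k) =
      v i * (v i * Rm j k j k + v j * Rm j k k i + v k * Rm j k i j)
    + v j * (v i * Rm k i j k + v j * Rm k i k i + v k * Rm k i i j)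
    + v k * (v i * Rm i j j k + v j * Rm i j k i + v k * Rm i j i j)"
    unfolding cyclic_wedge_def curv_form_linear_left curv_form_linear_right using assms by (simp add: curv_form_basis_wedge)
  moreover have "Rm k i j k = Rm j k k i" "Rm i j j k = Rm j k i j" "Rm i j k i = Rm k i i j"
    using pair_exchange assms by auto
  ultimately show ?thesis by (simp add: algebra_simps power2_eq_square)
qed

lemma sum_cyclic_cross_terms:
  "(\<Sum>i<n. \<Sum>j<n. \<Sum>k<n. v i * v j * Rm j k k i) + (\<Sum>i<n. \<Sum>j<n. \<Sum>k<n. v i * v k * Rm j k i j)
     + (\<Sum>i<n. \<Sum>j<n. \<Sum>k<n. v j * v k * Rm k i i j) = - 3 * ricci_quad n Rm v"
proof -
  let ?S = "\<lambda>f. (\<Sum>i<n. \<Sum>j<n. \<Sum>k<n. (f i j k::real))"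
  have c1: "?S (\<lambda>i j k. v i * v j * Rm j k k i) = - ricci_quad n Rm v"
  proof -
    have "?S (\<lambda>i j k. v i * v j * Rm j k k i) = ?S (\<lambda>i j k. - (v i * v j * Rm k i k j))"
    proof (intro sum.cong refl)
      fix i j k assume "i \<in> {..<n}" "j \<in> {..<n}" "k \<in> {..<n}"
      then have "Rm j k k i = - Rm k i k j" using antisym_first_pair[of j k k i] pair_exchange[of k j k i] by simp
      then show "v i * v j * Rm j k k i = - (v i * v j * Rm k i k j)" by simp
    qed
    also have "\<dots> = - (\<Sum>i<n. \<Sum>j<n. ricci n Rm i j * v i * v j)"
      unfolding ricci_def by (simp add: sum_negf sum_distrib_left sum_distrib_right mult_ac)
    finally show ?thesis unfolding ricci_quad_def .
  qed
  have c2: "?S (\<lambda>i j k. v i * v k * Rm j k i j) = - ricci_quad n Rm v"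
  proof -
    have "?S (\<lambda>i j k. v i * v k * Rm j k i j) = (\<Sum>i<n. \<Sum>k<n. \<Sum>j<n. v i * v k * Rm j k i j)"
      by (rule sum.cong[OF refl], rule sum.swap)
    also have "\<dots> = (\<Sum>i<n. \<Sum>k<n. \<Sum>j<n. - (v i * v k * Rm j i j k))"
    proof (intro sum.cong refl)
      fix i j k assume "i \<in> {..<n}" "j \<in> {..<n}" "k \<in> {..<n}"
      then have "Rm j k i j = - Rm j i j k" using pair_exchange[of j k i j] antisym_second_pair[of i j j k] antisym_first_pair[of i j k j] antisym_second_pair[of j i k j] by simp
      then show "v i * v k * Rm j k i j = - (v i * v k * Rm j i j k)" by simp
    qed
    also have "\<dots> = - (\<Sum>i<n. \<Sum>k<n. ricci n Rm i k * v i * v k)"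
      unfolding ricci_def by (simp add: sum_negf sum_distrib_left sum_distrib_right mult_ac)
    finally show ?thesis unfolding ricci_quad_def .
  qed
  have c3: "?S (\<lambda>i j k. v j * v k * Rm k i i j) = - ricci_quad n Rm v"
  proof -
    have "?S (\<lambda>i j k. v j * v k * Rm k i i j) = (\<Sum>j<n. \<Sum>i<n. \<Sum>k<n. v j * v k * Rm k i i j)" by (rule sum.swap)
    also have "\<dots> = (\<Sum>j<n. \<Sum>k<n. \<Sum>i<n. v j * v k * Rm k i i j)"
      by (rule sum.cong[OF refl], rule sum.swap)
    also have "\<dots> = (\<Sum>j<n. \<Sum>k<n. \<Sum>i<n. - (v j * v k * Rm i j i k))"
    proof (intro sum.cong refl)
      fix i j k assume "i \<in> {..<n}" "j \<in> {..<n}" "k \<in> {..<n}"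
      then have "Rm k i i j = - Rm i j i k" using antisym_first_pair[of k i i j] pair_exchange[of i k i j] by simp
      then show "v j * v k * Rm k i i j = - (v j * v k * Rm i j i k)" by simp
    qed
    also have "\<dots> = - (\<Sum>j<n. \<Sum>k<n. ricci n Rm j k * v j * v k)"
      unfolding ricci_def by (simp add: sum_negf sum_distrib_left sum_distrib_right mult_ac)
    finally show ?thesis unfolding ricci_quad_def .
  qed
  show ?thesis unfolding c1 c2 c3 by simp
qed

lemma sum_curv_form_cyclic_wedge:
  "(\<Sum>i<n. \<Sum>j<n. \<Sum>k<n. curv_form n Rm (cyclic_wedge v i j k) (cyclic_wedge v i j k))
     = 3 * ip n v v * scal n Rm - 6 * ricci_quad n Rm v"
proof -
  let ?S = "\<lambda>f. (\<Sum>i<n. \<Sum>j<n. \<Sum>k<n. (f i j k::real))"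
  have "?S (\<lambda>i j k. curv_form n Rm (cyclic_wedge v i j k) (cyclic_wedge v i j k)) =
      ?S (\<lambda>i j k. (v i)\<^sup>2 * Rm j k j k + (v j)\<^sup>2 * Rm k i k i + (v k)\<^sup>2 * Rm i j i j
        + 2 * v i * v j * Rm j k k i + 2 * v i * v k * Rm j k i j + 2 * v j * v k * Rm k i i j)"
    by (intro sum.cong refl) (simp add: curv_form_cyclic_wedge)
  also have "\<dots> = (?S (\<lambda>i j k. (v i)\<^sup>2 * Rm j k j k) + ?S (\<lambda>i j k. (v j)\<^sup>2 * Rm k i k i)
        + ?S (\<lambda>i j k. (v k)\<^sup>2 * Rm i j i j))
      + 2 * (?S (\<lambda>i j k. v i * v j * Rm j k k i) + ?S (\<lambda>i j k. v i * v k * Rm j k i j)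
        + ?S (\<lambda>i j k. v j * v k * Rm k i i j))"
    by (simp add: sum.distrib sum_distrib_left mult.assoc)
  finally show ?thesis unfolding sum_cyclic_square_terms sum_cyclic_cross_terms by simp
qed

end

section \<open>Ricci pinching implies \<open>R\<^sup>2 \<ge> 2 |Ric|\<^sup>2\<close>\<close>

definition ricci_pinched :: "nat \<Rightarrow> (nat \<Rightarrow> nat \<Rightarrow> nat \<Rightarrow> nat \<Rightarrow> real) \<Rightarrow> bool" where
  "ricci_pinched n Rm \<longleftrightarrow>
     (\<forall>v. 0 \<le> ricci_quad n Rm v \<and> ricci_quad n Rm v \<le> scal n Rm / 2 * ip n v v)"

lemma discriminant_le:
  fixes a b c :: real
  assumes "\<And>t. 0 \<le> a + 2 * b * t + c * t\<^sup>2" "c \<ge> 0"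
  shows "b\<^sup>2 \<le> a * c"
proof (cases "c = 0")
  case True
  have "b = 0"
  proof (rule ccontr)
    assume "b \<noteq> 0"
    have "0 \<le> a + 2 * b * (-(a + 1) / (2 * b)) + c * (-(a + 1) / (2 * b))\<^sup>2" by (rule assms(1))
    then show False using \<open>b \<noteq> 0\<close> True by (simp add: field_simps)
  qed
  then show ?thesis using True by simp
next
  case False
  then have c: "c > 0" using assms(2) by simp
  have "0 \<le> a + 2 * b * (- b / c) + c * (- b / c)\<^sup>2" by (rule assms(1))
  also have "\<dots> = a - b\<^sup>2 / c" using c by (simp add: field_simps power2_eq_square)
  finally show ?thesis using c by (simp add: field_simps mult.commute)
qed

text \<open>Cauchy--Schwarz for the semi-definite form \<open>P\<close>, applied to \<open>e\<^sub>j\<close> and the \<open>j\<close>-th row of \<open>P\<close>.\<close>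

lemma psd_row_sq_le:
  fixes P :: "nat \<Rightarrow> nat \<Rightarrow> real"
  assumes sym: "symmetric_mat n P" and psd: "\<And>v. 0 \<le> quad_form n P v"
    and up: "\<And>v. quad_form n P v \<le> c * ip n v v" and j: "j < n"
  shows "(\<Sum>k<n. (P j k)\<^sup>2) \<le> P j j * c"
proof -
  define y where "y = (\<lambda>k. P j k)"
  define r where "r = (\<Sum>k<n. (P j k)\<^sup>2)"
  have r0: "r \<ge> 0" unfolding r_def by (intro sum_nonneg) auto
  have Pjj: "P j j \<ge> 0" using psd[of "basis_vec j"] quad_form_basis_vec[OF j] by simp
  moreover have "ip n (basis_vec j) (basis_vec j) = 1" using ip_basis_vec[OF j] by (simp add: basis_vec_def)
  then have "P j j \<le> c" using up[of "basis_vec j"] quad_form_basis_vec[OF j] by simp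
  ultimately have c0: "c \<ge> 0" by linarith
  have "(bilin_form n P (basis_vec j) y)\<^sup>2 \<le> quad_form n P (basis_vec j) * quad_form n P y"
  proof (rule discriminant_le)
    show "0 \<le> quad_form n P (basis_vec j) + 2 * bilin_form n P (basis_vec j) y * t + quad_form n P y * t\<^sup>2" for t
      using psd[of "\<lambda>i. basis_vec j i + t * y i"] quad_form_add[OF sym] by (simp add: mult_ac)
  qed (rule psd)
  moreover have "bilin_form n P (basis_vec j) y = r"
    unfolding bilin_form_eq_ip r_def y_def using j by (simp add: ip_basis_vec_left mat_vec_def power2_eq_square)
  moreover have "quad_form n P y \<le> c * r"
    using up[of y] unfolding r_def y_def ip_def by (simp add: power2_eq_square)
  ultimately have "r\<^sup>2 \<le> P j j * (c * r)"
    using quad_form_basis_vec[OF j] Pjj by (metis mult_left_mono order_trans)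
  then have rr: "r * r \<le> (P j j * c) * r" by (simp add: power2_eq_square mult_ac)
  have "r \<le> P j j * c"
  proof (cases "r = 0")
    case True
    then show ?thesis using Pjj c0 by simp
  next
    case False
    then show ?thesis using rr r0 by (simp add: mult_le_cancel_right)
  qed
  then show ?thesis unfolding r_def .
qed

lemma trace_sq_ge_two_sum_sq:
  fixes P :: "nat \<Rightarrow> nat \<Rightarrow> real"
  assumes sym: "symmetric_mat n P" and psd: "\<And>v. 0 \<le> quad_form n P v"
    and up: "\<And>v. quad_form n P v \<le> (\<Sum>j<n. P j j) / 2 * ip n v v"
  shows "2 * (\<Sum>j<n. \<Sum>k<n. (P j k)\<^sup>2) \<le> (\<Sum>j<n. P j j)\<^sup>2"
proof -
  have "(\<Sum>j<n. \<Sum>k<n. (P j k)\<^sup>2) \<le> (\<Sum>j<n. P j j * ((\<Sum>j<n. P j j) / 2))"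
    by (intro sum_mono psd_row_sq_le[OF sym psd up]) auto
  also have "\<dots> = (\<Sum>j<n. P j j)\<^sup>2 / 2"
    by (subst sum_distrib_right[symmetric]) (simp add: power2_eq_square)
  finally show ?thesis by simp
qed

lemma scal_sq_ge_two_ricci_norm_sq_if_pinched:
  assumes "has_pair_symmetries n Rm" "ricci_pinched n Rm"
  shows "2 * ricci_norm_sq n Rm \<le> (scal n Rm)\<^sup>2"
proof -
  have "quad_form n (ricci n Rm) v = ricci_quad n Rm v" for v
    by (simp add: quad_form_def ricci_quad_def)
  then show ?thesis
    using assms(2) unfolding ricci_norm_sq_def ricci_pinched_def scal_def
    by (intro trace_sq_ge_two_sum_sq[OF symmetric_ricci[OF assms(1)]]) auto
qed

section \<open>Nonnegative sectional curvature\<close>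

lemma nonneg_sectional_curv4:
  assumes pair_sym: "has_pair_symmetries n Rm" and sec: "nonneg_sectional n Rm"
  shows "0 \<le> curv4 n Rm x y x y"
proof (cases "ip n x x = 0")
  case True
  then show ?thesis using curv4_zero_first[where x = x] ip_self_eq_0D by simp
next
  case False
  then have nx: "ip n x x > 0" using ip_self_nonneg[of n x] by linarith
  define w where "w = (\<lambda>i. y i + (- ip n x y / ip n x x) * x i)"
  have xy_xw: "curv4 n Rm x y x y = curv4 n Rm x w x w"
    unfolding w_def by (rule curv4_add_multiple[OF pair_sym, symmetric])
  have xw: "ip n x w = 0"
    unfolding w_def ip_add_right using nx by simp
  show ?thesis
  proof (cases "ip n w w = 0")
    case True
    then show ?thesis using xy_xw curv4_zero_second[where y = w] ip_self_eq_0D by simp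
  next
    case False
    then have nw: "ip n w w > 0" using ip_self_nonneg[of n w] by linarith
    define a where "a = 1 / sqrt (ip n x x)"
    define b where "b = 1 / sqrt (ip n w w)"
    have "ip n (\<lambda>i. a * x i) (\<lambda>i. a * x i) = 1" "ip n (\<lambda>i. b * w i) (\<lambda>i. b * w i) = 1"
      "ip n (\<lambda>i. a * x i) (\<lambda>i. b * w i) = 0"
      unfolding ip_scale_left ip_scale_right using nx nw xw by (simp_all add: a_def b_def)
    then have "0 \<le> curv4 n Rm (\<lambda>i. a * x i) (\<lambda>i. b * w i) (\<lambda>i. a * x i) (\<lambda>i. b * w i)"
      using sec unfolding nonneg_sectional_def by blast
    then have "0 \<le> (a * b)\<^sup>2 * curv4 n Rm x w x w" by (simp only: curv4_scale)
    moreover have "(a * b)\<^sup>2 > 0" using nx nw by (simp add: a_def b_def)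
    ultimately show ?thesis using xy_xw by (simp add: zero_le_mult_iff)
  qed
qed

lemma cross_product_wedge_identity:
  fixes a1 a2 a3 b1 b2 b3 x y z I J K I' J' K' :: real
  assumes "x = a2 * b3 - a3 * b2" "y = a3 * b1 - a1 * b3" "z = a1 * b2 - a2 * b1"
  shows "x * (J * K' - J' * K) + y * (K * I' - K' * I) + z * (I * J' - I' * J) =
    (a1 * I + a2 * J + a3 * K) * (b1 * I' + b2 * J' + b3 * K')
      - (a1 * I' + a2 * J' + a3 * K') * (b1 * I + b2 * J + b3 * K)"
  unfolding assms by (simp add: algebra_simps)

lemma exists_cross_product_factors:
  fixes x y z :: real
  shows "\<exists>a1 a2 a3 b1 b2 b3. x = a2 * b3 - a3 * b2 \<and> y = a3 * b1 - a1 * b3 \<and> z = a1 * b2 - a2 * b1"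
proof (cases "x\<^sup>2 + y\<^sup>2 = 0")
  case True
  then have "x = 0" "y = 0" by (simp_all add: sum_power2_eq_zero_iff)
  then show ?thesis by (intro exI[of _ 1] exI[of _ 0] exI[of _ 0] exI[of _ 0] exI[of _ z] exI[of _ 0]) simp
next
  case False
  define d where "d = x\<^sup>2 + y\<^sup>2"
  have d: "d \<noteq> 0" using False d_def by simp
  have "y * (z * y / d) - (- x) * (z * x / d) = z * (x\<^sup>2 + y\<^sup>2) / d"
    using d by (simp add: field_simps power2_eq_square)
  also have "\<dots> = z" using d unfolding d_def by simp
  finally have "x = (- x) * (- 1) - 0 * (z * y / d) \<and> y = 0 * (z * x / d) - y * (- 1)
      \<and> z = y * (z * y / d) - (- x) * (z * x / d)" by simp
  then show ?thesis by blast
qed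

text \<open>\<open>cyclic_wedge v i j k\<close> lies in \<open>\<Lambda>\<^sup>2\<close> of the (at most) 3-dimensional span of \<open>e\<^sub>i, e\<^sub>j, e\<^sub>k\<close>,
  where every 2-vector is decomposable: it is the wedge of two factors of its cross product vector.\<close>

lemma cyclic_wedge_decomposable: "\<exists>A B. cyclic_wedge v i j k = wedge A B"
proof -
  obtain a1 a2 a3 b1 b2 b3 where c: "v i = a2 * b3 - a3 * b2" "v j = a3 * b1 - a1 * b3" "v k = a1 * b2 - a2 * b1"
    using exists_cross_product_factors by blast
  define A where "A = (\<lambda>p. a1 * basis_vec i p + a2 * basis_vec j p + a3 * basis_vec k p)"
  define B where "B = (\<lambda>p. b1 * basis_vec i p + b2 * basis_vec j p + b3 * basis_vec k p)"
  have "cyclic_wedge v i j k p q = wedge A B p q" for p q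
    unfolding cyclic_wedge_def basis_wedge_def wedge_def A_def B_def by (rule cross_product_wedge_identity[OF c])
  then show ?thesis by blast
qed

lemma ricci_pinched_if_nonneg_sectional:
  assumes pair_sym: "has_pair_symmetries n Rm" and sec: "nonneg_sectional n Rm"
  shows "ricci_pinched n Rm"
  unfolding ricci_pinched_def
proof (intro allI conjI)
  fix v
  show "0 \<le> ricci_quad n Rm v"
    unfolding ricci_quad_eq_sum_curv4 by (intro sum_nonneg nonneg_sectional_curv4[OF assms])
  have "0 \<le> curv_form n Rm (cyclic_wedge v i j k) (cyclic_wedge v i j k)" for i j k
    using cyclic_wedge_decomposable[of v i j k] curv_form_wedge[OF pair_sym] nonneg_sectional_curv4[OF assms]
    by auto
  then have "0 \<le> (\<Sum>i<n. \<Sum>j<n. \<Sum>k<n. curv_form n Rm (cyclic_wedge v i j k) (cyclic_wedge v i j k))"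
    by (intro sum_nonneg)
  then show "ricci_quad n Rm v \<le> scal n Rm / 2 * ip n v v"
    unfolding sum_curv_form_cyclic_wedge[OF pair_sym] by simp
qed

section \<open>2-nonnegative curvature operator\<close>

lemma set_wedge_pairs: "set (wedge_pairs n) = {(i,j). i < j \<and> j < n}"
proof (intro Set.set_eqI iffI)
  fix x assume "x \<in> set (wedge_pairs n)" then show "x \<in> {(i,j). i < j \<and> j < n}"
    unfolding wedge_pairs_def by auto
next
  fix x assume "x \<in> {(i,j). i < j \<and> j < n}"
  then obtain a b where "x = (a,b)" "a < b" "b < n" by auto
  then show "x \<in> set (wedge_pairs n)" unfolding wedge_pairs_def by (auto intro!: bexI[of _ a])
qed

lemma map_Pair_upt_inj:
  assumes "x < n" "y < n" "map (Pair x) [Suc x..<n] = map (Pair y) [Suc y..<(n::nat)]"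
  shows "x = y"
proof (cases "Suc x < n")
  case True
  then have "(x, Suc x) \<in> set (map (Pair x) [Suc x..<n])" by simp
  then have "(x, Suc x) \<in> set (map (Pair y) [Suc y..<n])" using assms(3) by simp
  then show ?thesis by auto
next
  case False
  then have "map (Pair y) [Suc y..<n] = []" using assms(3) by simp
  then have "\<not> Suc y < n" using assms(2) by auto
  then show ?thesis using False assms(1,2) by linarith
qed

lemma distinct_wedge_pairs: "distinct (wedge_pairs n)"
  unfolding wedge_pairs_def
proof (rule distinct_concat)
  show "distinct (map (\<lambda>i. map (Pair i) [Suc i..<n]) [0..<n])"
    by (auto simp: distinct_map inj_on_def intro: map_Pair_upt_inj)
qed (auto simp: distinct_map inj_on_def)

lemma length_wedge_pairs: "length (wedge_pairs n) = n * (n - 1) div 2"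
proof -
  have "length (wedge_pairs n) = (\<Sum>i<n. n - Suc i)"
    unfolding wedge_pairs_def
    by (simp add: length_concat comp_def interv_sum_list_conv_sum_set_nat lessThan_atLeast0)
  also have "\<dots> = \<Sum>{0..<n}"
    using sum.nat_diff_reindex[of id n] by (simp add: lessThan_atLeast0)
  finally show ?thesis by (simp add: Sum_Ico_nat)
qed

lemma length_wedge_pairs_ge: "4 \<le> n \<Longrightarrow> n + 1 \<le> length (wedge_pairs n)"
proof -
  assume n: "4 \<le> n"
  have "n * 3 \<le> n * (n - 1)" using n by (intro mult_le_mono2) auto
  moreover have "2 * (n + 1) \<le> n * 3" using n by simp
  ultimately have "2 * (n + 1) \<le> n * (n - 1)" by (rule le_trans[rotated])
  then show ?thesis unfolding length_wedge_pairs by simp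
qed

lemma sum_wedge_pairs: "(\<Sum>a<length (wedge_pairs n). g (fst (wedge_pairs n ! a)) (snd (wedge_pairs n ! a))) = (\<Sum>p<n. \<Sum>q<n. if p < q then g p q else (0::real))"
proof -
  let ?ps = "wedge_pairs n"
  let ?g = "\<lambda>x. g (fst x) (snd x)"
  have "(\<Sum>a<length ?ps. ?g (?ps ! a)) = sum_list (map ?g ?ps)"
    by (simp add: sum_list_sum_nth atLeast0LessThan)
  also have "\<dots> = sum ?g (set ?ps)" by (rule sum_list_distinct_conv_sum_set[OF distinct_wedge_pairs])
  also have "set ?ps = {x \<in> {..<n} \<times> {..<n}. fst x < snd x}" unfolding set_wedge_pairs by auto
  also have "sum ?g \<dots> = (\<Sum>x\<in>{..<n} \<times> {..<n}. if fst x < snd x then ?g x else 0)"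
    by (rule sum.inter_filter) auto
  also have "\<dots> = (\<Sum>p<n. \<Sum>q<n. if p < q then g p q else 0)"
    by (subst sum.cartesian_product) (rule sum.cong, auto)
  finally show ?thesis .
qed

lemma sum_upper_triangle:
  fixes g :: "nat \<Rightarrow> nat \<Rightarrow> real"
  assumes sym: "\<And>p q. p < n \<Longrightarrow> q < n \<Longrightarrow> g p q = g q p" and dg: "\<And>p. p < n \<Longrightarrow> g p p = 0"
  shows "(\<Sum>p<n. \<Sum>q<n. if p < q then g p q else 0) = (\<Sum>p<n. \<Sum>q<n. g p q) / 2"
proof -
  have "(\<Sum>p<n. \<Sum>q<n. g p q) = (\<Sum>p<n. \<Sum>q<n. (if p < q then g p q else 0) + (if q < p then g p q else 0))"
    by (intro sum.cong refl) (auto simp: dg)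
  also have "\<dots> = (\<Sum>p<n. \<Sum>q<n. if p < q then g p q else 0) + (\<Sum>p<n. \<Sum>q<n. if q < p then g p q else 0)"
    by (simp add: sum.distrib)
  also have "(\<Sum>p<n. \<Sum>q<n. if q < p then g p q else 0) = (\<Sum>q<n. \<Sum>p<n. if q < p then g p q else 0)"
    by (rule sum.swap)
  also have "\<dots> = (\<Sum>p<n. \<Sum>q<n. if p < q then g p q else 0)"
    by (intro sum.cong refl) (auto simp: sym)
  finally show ?thesis by simp
qed


definition wedge_coords :: "nat \<Rightarrow> (nat \<Rightarrow> nat \<Rightarrow> real) \<Rightarrow> nat \<Rightarrow> real" where
  "wedge_coords n X = (\<lambda>a. X (fst (wedge_pairs n ! a)) (snd (wedge_pairs n ! a)))"

definition antisym_mat :: "nat \<Rightarrow> (nat \<Rightarrow> nat \<Rightarrow> real) \<Rightarrow> bool" where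
  "antisym_mat n X \<longleftrightarrow> (\<forall>p<n. \<forall>q<n. X p q = - X q p)"

lemma antisym_matD: "antisym_mat n X \<Longrightarrow> p < n \<Longrightarrow> q < n \<Longrightarrow> X p q = - X q p"
  unfolding antisym_mat_def by blast

lemma antisym_mat_diag: "antisym_mat n X \<Longrightarrow> p < n \<Longrightarrow> X p p = 0"
  using antisym_matD[of n X p p] by linarith

lemma ip_wedge_coords:
  assumes "antisym_mat n X" "antisym_mat n Y"
  shows "ip (length (wedge_pairs n)) (wedge_coords n Y) (wedge_coords n X) = (\<Sum>p<n. \<Sum>q<n. Y p q * X p q) / 2"
proof -
  have "ip (length (wedge_pairs n)) (wedge_coords n Y) (wedge_coords n X) = (\<Sum>p<n. \<Sum>q<n. if p < q then Y p q * X p q else 0)"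
    unfolding ip_def wedge_coords_def using sum_wedge_pairs[where n=n and g="\<lambda>p q. Y p q * X p q"] by simp
  also have "\<dots> = (\<Sum>p<n. \<Sum>q<n. Y p q * X p q) / 2"
  proof (rule sum_upper_triangle)
    fix p q assume "p < n" "q < n"
    then show "Y p q * X p q = Y q p * X q p" using antisym_matD[OF assms(1), of p q] antisym_matD[OF assms(2), of p q] by simp
  next
    fix p assume "p < n" then show "Y p p * X p p = 0" using antisym_mat_diag[OF assms(1)] by simp
  qed
  finally show ?thesis .
qed

definition curv_op_entries :: "nat \<Rightarrow> (nat \<Rightarrow> nat \<Rightarrow> nat \<Rightarrow> nat \<Rightarrow> real) \<Rightarrow> nat \<Rightarrow> nat \<Rightarrow> real" where
  "curv_op_entries n Rm = (\<lambda>a b. Rm (fst (wedge_pairs n ! a)) (snd (wedge_pairs n ! a)) (fst (wedge_pairs n ! b)) (snd (wedge_pairs n ! b)))"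

lemma quad_form_wedge_coords:
  assumes st: "has_pair_symmetries n Rm" and X: "antisym_mat n X"
  shows "quad_form (length (wedge_pairs n)) (curv_op_entries n Rm) (wedge_coords n X) = curv_form n Rm X X"
proof -
  let ?N = "length (wedge_pairs n)"
  define G where "G = (\<lambda>p q. (\<Sum>r<n. \<Sum>s<n. Rm p q r s * X p q * X r s) / 2)"
  have inner: "(\<Sum>b<?N. curv_op_entries n Rm a b * wedge_coords n X a * wedge_coords n X b) = G (fst (wedge_pairs n ! a)) (snd (wedge_pairs n ! a))"
    if "a < ?N" for a
  proof -
    define p where "p = fst (wedge_pairs n ! a)"
    define q where "q = snd (wedge_pairs n ! a)"
    have pq: "p < n" "q < n" using that nth_mem[OF that] unfolding set_wedge_pairs p_def q_def by auto
    have "(\<Sum>b<?N. curv_op_entries n Rm a b * wedge_coords n X a * wedge_coords n X b) = (\<Sum>r<n. \<Sum>s<n. if r < s then Rm p q r s * X p q * X r s else 0)"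
      unfolding curv_op_entries_def wedge_coords_def p_def[symmetric] q_def[symmetric]
      using sum_wedge_pairs[where n=n and g="\<lambda>r s. Rm p q r s * X p q * X r s"] by simp
    also have "\<dots> = G p q" unfolding G_def
    proof (rule sum_upper_triangle)
      fix r s assume "r < n" "s < n"
      then show "Rm p q r s * X p q * X r s = Rm p q s r * X p q * X s r"
        using antisym_second_pair[OF st, of p q r s] antisym_matD[OF X, of r s] pq by simp
    next
      fix r assume "r < n" then show "Rm p q r r * X p q * X r r = 0" using antisym_mat_diag[OF X] by simp
    qed
    finally show ?thesis unfolding p_def q_def .
  qed
  have "quad_form ?N (curv_op_entries n Rm) (wedge_coords n X) = (\<Sum>a<?N. G (fst (wedge_pairs n ! a)) (snd (wedge_pairs n ! a)))"
    unfolding quad_form_def using inner by (intro sum.cong) auto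
  also have "\<dots> = (\<Sum>p<n. \<Sum>q<n. if p < q then G p q else 0)"
    using sum_wedge_pairs[where n=n and g="G"] by simp
  also have "\<dots> = (\<Sum>p<n. \<Sum>q<n. G p q) / 2"
  proof (rule sum_upper_triangle)
    fix p q assume pq: "p < n" "q < n"
    have "(\<Sum>r<n. \<Sum>s<n. Rm p q r s * X p q * X r s) = (\<Sum>r<n. \<Sum>s<n. Rm q p r s * X q p * X r s)"
      by (intro sum.cong refl) (use antisym_first_pair[OF st, of p q] antisym_matD[OF X, of p q] pq in simp)
    then show "G p q = G q p" unfolding G_def by simp
  next
    fix p assume "p < n" then show "G p p = 0" unfolding G_def using antisym_mat_diag[OF X] by simp
  qed
  also have "\<dots> = curv_form n Rm X X" unfolding G_def curv_form_def by (simp add: sum_divide_distrib)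
  finally show ?thesis .
qed

definition pair_index :: "nat \<Rightarrow> nat \<times> nat \<Rightarrow> nat" where
  "pair_index n = the_inv_into {..<length (wedge_pairs n)} (\<lambda>a. wedge_pairs n ! a)"

definition antisym_of_coords :: "nat \<Rightarrow> (nat \<Rightarrow> real) \<Rightarrow> nat \<Rightarrow> nat \<Rightarrow> real" where
  "antisym_of_coords n y =
     (\<lambda>p q. if p < q then y (pair_index n (p, q)) else if q < p then - y (pair_index n (q, p)) else 0)"

lemma antisym_mat_antisym_of_coords: "antisym_mat n (antisym_of_coords n y)"
  unfolding antisym_mat_def antisym_of_coords_def by auto

lemma wedge_coords_antisym_of_coords:
  assumes "a < length (wedge_pairs n)"
  shows "wedge_coords n (antisym_of_coords n y) a = y a"
proof -
  let ?ps = "wedge_pairs n"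
  have inj: "inj_on (\<lambda>a. ?ps ! a) {..<length ?ps}"
    using distinct_wedge_pairs[of n] by (simp add: inj_on_def nth_eq_iff_index_eq)
  have mem: "?ps ! a \<in> set ?ps" using assms by simp
  then have lt: "fst (?ps ! a) < snd (?ps ! a)" unfolding set_wedge_pairs by auto
  have "pair_index n (?ps ! a) = a" unfolding pair_index_def using the_inv_into_f_f[OF inj] assms by simp
  then have "pair_index n (fst (?ps ! a), snd (?ps ! a)) = a" by simp
  then show ?thesis unfolding wedge_coords_def antisym_of_coords_def using lt by simp
qed

lemma ip_wedge_coords_eq_antisym_of_coords:
  assumes X: "antisym_mat n X"
  shows "ip (length (wedge_pairs n)) y (wedge_coords n X) = (\<Sum>p<n. \<Sum>q<n. antisym_of_coords n y p q * X p q) / 2"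
proof -
  let ?N = "length (wedge_pairs n)"
  have "ip ?N y (wedge_coords n X) = ip ?N (wedge_coords n (antisym_of_coords n y)) (wedge_coords n X)"
    by (rule ip_cong_left) (simp add: wedge_coords_antisym_of_coords)
  also have "\<dots> = (\<Sum>p<n. \<Sum>q<n. antisym_of_coords n y p q * X p q) / 2"
    by (rule ip_wedge_coords[OF X antisym_mat_antisym_of_coords])
  finally show ?thesis .
qed

definition rank_one_tensor :: "(nat \<Rightarrow> nat \<Rightarrow> real) \<Rightarrow> nat \<Rightarrow> nat \<Rightarrow> nat \<Rightarrow> nat \<Rightarrow> real" where
  "rank_one_tensor Y = (\<lambda>p q r s. Y p q * Y r s)"

lemma rank_one_tensor_pair_symmetries:
  assumes "antisym_mat n Y"
  shows "has_pair_symmetries n (rank_one_tensor Y)"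
  unfolding has_pair_symmetries_def rank_one_tensor_def
proof (intro allI impI conjI)
  fix i j k l assume "i < n" "j < n" "k < n" "l < n"
  then show "Y i j * Y k l = - (Y j i * Y k l)" using antisym_matD[OF assms, of i j] by simp
qed (simp add: mult.commute)

lemma curv_form_rank_one_tensor:
  "curv_form n (rank_one_tensor Y) X X = ((\<Sum>p<n. \<Sum>q<n. Y p q * X p q) / 2)\<^sup>2"
proof -
  have "(\<Sum>p<n. \<Sum>q<n. Y p q * X p q)\<^sup>2 = (\<Sum>p<n. \<Sum>q<n. \<Sum>r<n. \<Sum>s<n. (Y p q * X p q) * (Y r s * X r s))"
    by (simp only: power2_eq_square sum_distrib_right) (simp only: sum_distrib_left)
  then show ?thesis unfolding curv_form_def rank_one_tensor_def by (simp add: power_divide mult_ac)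
qed

lemma scal_rank_one_tensor: "scal n (rank_one_tensor Y) = (\<Sum>p<n. \<Sum>q<n. Y p q * Y p q)"
  unfolding scal_def ricci_def rank_one_tensor_def by (rule sum.swap)

lemma antisym_wedge: "antisym_mat n (wedge x y)"
  unfolding antisym_mat_def wedge_def by auto

lemma antisym_cyclic_wedge: "antisym_mat n (cyclic_wedge v i j k)"
  unfolding antisym_mat_def cyclic_wedge_def basis_wedge_def wedge_def by (auto simp: algebra_simps)

lemma ip_wedge_coords_basis_wedge:
  assumes i: "i < n"
  shows "ip (length (wedge_pairs n)) (wedge_coords n (wedge (basis_vec i) v)) (wedge_coords n (wedge (basis_vec i) v))
    = ip n v v - (v i)\<^sup>2"
proof -
  let ?e = "basis_vec i"
  have se: "\<And>f. (\<Sum>p<n. f p * ?e p) = f i" using i by (rule sum_basis_vec)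
  have ee: "(\<Sum>p<n. ?e p * ?e p) = 1" using se[of ?e] by (simp add: basis_vec_def)
  have "(\<Sum>p<n. \<Sum>q<n. wedge ?e v p q * wedge ?e v p q)
      = (\<Sum>p<n. \<Sum>q<n. (?e p * ?e p) * (v q * v q) + (v p * v p) * (?e q * ?e q) - 2 * ((v p * ?e p) * (v q * ?e q)))"
    unfolding wedge_def by (intro sum.cong refl) (simp add: algebra_simps)
  also have "\<dots> = (\<Sum>p<n. \<Sum>q<n. (?e p * ?e p) * (v q * v q)) + (\<Sum>p<n. \<Sum>q<n. (v p * v p) * (?e q * ?e q))
       - 2 * (\<Sum>p<n. \<Sum>q<n. (v p * ?e p) * (v q * ?e q))"
    by (simp add: sum.distrib sum_subtractf sum_distrib_left)
  also have "\<dots> = (\<Sum>p<n. ?e p * ?e p) * (\<Sum>q<n. v q * v q) + (\<Sum>p<n. v p * v p) * (\<Sum>q<n. ?e q * ?e q)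
        - 2 * (\<Sum>p<n. v p * ?e p) * (\<Sum>q<n. v q * ?e q)"
    by (simp only: sum_product mult.assoc)
  also have "\<dots> = 2 * ip n v v - 2 * (v i)\<^sup>2" unfolding ee se by (simp add: ip_def power2_eq_square)
  finally show ?thesis using ip_wedge_coords[OF antisym_wedge antisym_wedge, of n "basis_vec i" v "basis_vec i" v] by simp
qed

definition ricci_test_vec :: "nat \<Rightarrow> (nat \<Rightarrow> real) \<Rightarrow> nat \<Rightarrow> nat \<Rightarrow> real" where
  "ricci_test_vec n v i = wedge_coords n (wedge (basis_vec i) v)"

definition cyclic_test_vec :: "nat \<Rightarrow> (nat \<Rightarrow> real) \<Rightarrow> nat \<times> nat \<times> nat \<Rightarrow> nat \<Rightarrow> real" where
  "cyclic_test_vec n v t = (case t of (i, j, k) \<Rightarrow> wedge_coords n (cyclic_wedge v i j k))"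

abbreviation triples :: "nat \<Rightarrow> (nat \<times> nat \<times> nat) set" where
  "triples n \<equiv> {..<n} \<times> {..<n} \<times> {..<n}"

lemma sum_triples: "(\<Sum>t\<in>triples n. f t) = (\<Sum>i<n. \<Sum>j<n. \<Sum>k<n. (f (i, j, k) :: real))"
  by (simp add: sum.cartesian_product)

lemma ricci_quad_eq_sum_test_vec:
  assumes "has_pair_symmetries n Rm"
  shows "ricci_quad n Rm v = (\<Sum>i<n. quad_form (length (wedge_pairs n)) (curv_op_entries n Rm) (ricci_test_vec n v i))"
  unfolding ricci_test_vec_def ricci_quad_eq_sum_curv4
  by (simp add: quad_form_wedge_coords[OF assms antisym_wedge] curv_form_wedge[OF assms])

lemma half_scal_minus_ricci_quad_eq_sum_test_vec:
  assumes "has_pair_symmetries n Rm"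
  shows "scal n Rm / 2 * ip n v v - ricci_quad n Rm v
    = (\<Sum>t\<in>triples n. 1 / 6 * quad_form (length (wedge_pairs n)) (curv_op_entries n Rm) (cyclic_test_vec n v t))"
  using sum_curv_form_cyclic_wedge[OF assms, of v]
  by (simp add: sum_triples cyclic_test_vec_def quad_form_wedge_coords[OF assms antisym_cyclic_wedge]
      sum_divide_distrib[symmetric])

lemma sum_ip_self_ricci_test_vec:
  "(\<Sum>i<n. ip (length (wedge_pairs n)) (ricci_test_vec n v i) (ricci_test_vec n v i)) = (real n - 1) * ip n v v"
proof -
  have "(\<Sum>i<n. ip (length (wedge_pairs n)) (ricci_test_vec n v i) (ricci_test_vec n v i)) = (\<Sum>i<n. ip n v v - (v i)\<^sup>2)"
    unfolding ricci_test_vec_def by (intro sum.cong refl) (simp add: ip_wedge_coords_basis_wedge)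
  also have "\<dots> = real n * ip n v v - ip n v v" by (simp add: sum_subtractf ip_def power2_eq_square)
  finally show ?thesis by (simp add: algebra_simps)
qed

text \<open>Evaluate the identities above on the rank-one tensor \<open>Y \<otimes> Y\<close> of the 2-form \<open>Y\<close> with coordinates
  \<open>y\<close>: its curvature form is the squared inner product with \<open>y\<close> and its scalar curvature is \<open>2 |y|\<^sup>2\<close>.\<close>

lemma sum_sq_ip_test_vecs:
  assumes y: "ip (length (wedge_pairs n)) y y = 1"
  shows "(\<Sum>i<n. (ip (length (wedge_pairs n)) y (ricci_test_vec n v i))\<^sup>2)
    + (\<Sum>t\<in>triples n. 1 / 6 * (ip (length (wedge_pairs n)) y (cyclic_test_vec n v t))\<^sup>2) = ip n v v"
proof -
  let ?N = "length (wedge_pairs n)"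
  define T where "T = rank_one_tensor (antisym_of_coords n y)"
  have pair_sym: "has_pair_symmetries n T"
    unfolding T_def by (rule rank_one_tensor_pair_symmetries[OF antisym_mat_antisym_of_coords])
  have sq: "(ip ?N y (wedge_coords n X))\<^sup>2 = curv_form n T X X" if "antisym_mat n X" for X
    unfolding T_def curv_form_rank_one_tensor ip_wedge_coords_eq_antisym_of_coords[OF that] ..
  have "ip ?N y y = ip ?N (wedge_coords n (antisym_of_coords n y)) y"
    by (rule ip_cong_left) (simp add: wedge_coords_antisym_of_coords)
  also have "\<dots> = ip ?N (wedge_coords n (antisym_of_coords n y)) (wedge_coords n (antisym_of_coords n y))"
    by (rule ip_cong_right) (simp add: wedge_coords_antisym_of_coords)
  finally have "scal n T = 2"
    using y ip_wedge_coords[OF antisym_mat_antisym_of_coords antisym_mat_antisym_of_coords, of n y y]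
    unfolding T_def scal_rank_one_tensor by simp
  then have "(\<Sum>t\<in>triples n. 1 / 6 * (ip ?N y (cyclic_test_vec n v t))\<^sup>2) = ip n v v - ricci_quad n T v"
    using sum_curv_form_cyclic_wedge[OF pair_sym, of v]
    by (simp add: sum_triples cyclic_test_vec_def sq[OF antisym_cyclic_wedge] sum_divide_distrib[symmetric])
  moreover have "(\<Sum>i<n. (ip ?N y (ricci_test_vec n v i))\<^sup>2) = ricci_quad n T v"
    unfolding ricci_test_vec_def ricci_quad_eq_sum_curv4
    by (simp add: sq[OF antisym_wedge] curv_form_wedge[OF pair_sym])
  ultimately show ?thesis by simp
qed

lemma curv_op_spectrum:
  assumes pair_sym: "has_pair_symmetries n Rm"
  obtains u \<mu> where "orthonormal_eigenbasis (length (wedge_pairs n)) (curv_op_entries n Rm) u \<mu>"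
    "mono_on {..<length (wedge_pairs n)} \<mu>"
    "curv_op_eigenvalues n Rm = map \<mu> [0..<length (wedge_pairs n)]"
proof -
  let ?N = "length (wedge_pairs n)"
  have "fst (wedge_pairs n ! a) < n \<and> snd (wedge_pairs n ! a) < n" if "a < ?N" for a
    using nth_mem[OF that] unfolding set_wedge_pairs by auto
  then have "symmetric_mat ?N (curv_op_entries n Rm)"
    unfolding symmetric_mat_def curv_op_entries_def using pair_exchange[OF pair_sym] by simp
  then obtain u \<mu> where u: "orthonormal ?N ?N u" "\<And>j. j < ?N \<Longrightarrow> is_eigenpair ?N (curv_op_entries n Rm) (u j) (\<mu> j)"
    and mono: "mono_on {..<?N} \<mu>"
    using symmetric_mat_orthonormal_eigenbasis by blast
  interpret E: orthonormal_eigenbasis ?N "curv_op_entries n Rm" u \<mu>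
    using u by unfold_locales
  have mat: "curv_op_mat n Rm = mat_of_entries ?N (curv_op_entries n Rm)"
    unfolding curv_op_mat_def Let_def mat_of_entries_def curv_op_entries_def by (simp add: case_prod_beta)
  have sorted: "sorted (map \<mu> [0..<?N])"
    using mono unfolding sorted_iff_nth_mono by (auto intro: mono_onD)
  have "curv_op_eigenvalues n Rm = map \<mu> [0..<?N]"
    unfolding curv_op_eigenvalues_def mat E.proots_char_poly sorted_list_of_multiset_mset sorted_sort_id[OF sorted] ..
  with that E.orthonormal_eigenbasis_axioms mono show thesis by blast
qed

lemma ricci_pinched_if_two_nonneg_curv_op:
  assumes pair_sym: "has_pair_symmetries n Rm" and n: "4 \<le> n" and two_nonneg: "two_nonneg_curv_op n Rm"
  shows "ricci_pinched n Rm"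
proof -
  define N where "N = length (wedge_pairs n)"
  obtain u \<mu> where eb: "orthonormal_eigenbasis N (curv_op_entries n Rm) u \<mu>" and mono: "mono_on {..<N} \<mu>"
    and ev: "curv_op_eigenvalues n Rm = map \<mu> [0..<N]"
    unfolding N_def by (rule curv_op_spectrum[OF pair_sym])
  interpret E: orthonormal_eigenbasis N "curv_op_entries n Rm" u \<mu> by (fact eb)
  have Nn: "n + 1 \<le> N" unfolding N_def by (rule length_wedge_pairs_ge[OF n])
  then have "0 \<le> \<mu> 0 + \<mu> 1" using two_nonneg n unfolding two_nonneg_curv_op_def ev Let_def by simp
  note weighted = E.weighted_quad_form_sum_nonneg[OF _ mono this]
  show ?thesis unfolding ricci_pinched_def
  proof (intro allI conjI)
    fix v
    define C where "C k = (\<Sum>i<n. 1 * (ip N (u k) (ricci_test_vec n v i))\<^sup>2)" for k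
    define D where "D k = (\<Sum>t\<in>triples n. 1 / 6 * (ip N (u k) (cyclic_test_vec n v t))\<^sup>2)" for k
    have CD: "C k + D k = ip n v v" "0 \<le> C k" "0 \<le> D k" if "k < N" for k
      using sum_sq_ip_test_vecs[of n "u k" v] E.orth that
      by (auto simp: C_def D_def N_def orthonormal_def intro: sum_nonneg)
    have trace_C: "(\<Sum>i<n. 1 * ip N (ricci_test_vec n v i) (ricci_test_vec n v i)) = (real n - 1) * ip n v v"
      unfolding N_def using sum_ip_self_ricci_test_vec by simp
    moreover have "(\<Sum>i<n. 1 * ip N (ricci_test_vec n v i) (ricci_test_vec n v i)) = (\<Sum>k<N. C k)"
      unfolding C_def E.parseval[symmetric] by (subst sum.swap) simp
    moreover have "(\<Sum>t\<in>triples n. 1 / 6 * ip N (cyclic_test_vec n v t) (cyclic_test_vec n v t)) = (\<Sum>k<N. D k)"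
      unfolding D_def E.parseval[symmetric] by (subst sum.swap) (simp add: sum_distrib_left)
    moreover have "(\<Sum>k<N. D k) = (\<Sum>k<N. ip n v v - C k)"
      using CD(1) by (intro sum.cong) (auto simp: algebra_simps)
    ultimately have trace_D: "(\<Sum>t\<in>triples n. 1 / 6 * ip N (cyclic_test_vec n v t) (cyclic_test_vec n v t))
         = (real N - (real n - 1)) * ip n v v"
      by (simp add: sum_subtractf algebra_simps)
    have v0: "0 \<le> ip n v v" by (rule ip_self_nonneg)
    have C_le: "C k \<le> ip n v v" and D_le: "D k \<le> ip n v v" if "k < N" for k
      using CD[OF that] by linarith+
    have N2: "2 \<le> N" using Nn n by simp
    have "0 \<le> (\<Sum>i<n. 1 * quad_form N (curv_op_entries n Rm) (ricci_test_vec n v i))"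
    proof (rule weighted[OF N2])
      show "2 * ip n v v \<le> (\<Sum>i<n. 1 * ip N (ricci_test_vec n v i) (ricci_test_vec n v i))"
        unfolding trace_C using n v0 by (intro mult_right_mono) auto
    qed (use C_le in \<open>auto simp: C_def\<close>)
    then show "0 \<le> ricci_quad n Rm v"
      unfolding ricci_quad_eq_sum_test_vec[OF pair_sym] N_def by simp
    have "0 \<le> (\<Sum>t\<in>triples n. 1 / 6 * quad_form N (curv_op_entries n Rm) (cyclic_test_vec n v t))"
    proof (rule weighted[OF N2])
      show "2 * ip n v v \<le> (\<Sum>t\<in>triples n. 1 / 6 * ip N (cyclic_test_vec n v t) (cyclic_test_vec n v t))"
        unfolding trace_D using Nn v0 by (intro mult_right_mono) auto
    qed (use D_le in \<open>auto simp: D_def\<close>)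
    then show "ricci_quad n Rm v \<le> scal n Rm / 2 * ip n v v"
      using half_scal_minus_ricci_quad_eq_sum_test_vec[OF pair_sym, of v] unfolding N_def by simp
  qed
qed

theorem lemma4p4:
  fixes n :: nat and Rm :: "nat \<Rightarrow> nat \<Rightarrow> nat \<Rightarrow> nat \<Rightarrow> real"
  assumes "alg_curv_tensor n Rm"
    and "(n = 3 \<and> nonneg_sectional n Rm) \<or> (n \<ge> 4 \<and> two_nonneg_curv_op n Rm)"
  shows "(scal n Rm)\<^sup>2 - 2 * ricci_norm_sq n Rm \<ge> 0"
proof -
  have pair_sym: "has_pair_symmetries n Rm"
    using assms(1) by (rule alg_curv_tensor_pair_symmetries)
  have "ricci_pinched n Rm"
    using assms(2) ricci_pinched_if_nonneg_sectional[OF pair_sym] ricci_pinched_if_two_nonneg_curv_op[OF pair_sym]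
    by blast
  then show ?thesis using scal_sq_ge_two_ricci_norm_sq_if_pinched[OF pair_sym] by simp
qed

end
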